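(* Let $(V,\mathrm d)$ be the domain complex of a closed Hilbert complex $(W,\mathrm d)$, and let $(V_h,\mathrm d_h)$, $h>0$, be domain complexes of closed Hilbert complexes $(W_h,\mathrm d_h)$, with morphisms $i_h\colon V_h\to V$ extending to bounded maps $W_h\to W$ and morphisms $\pi_h\colon V\to V_h$ (bounded in $V$-norms), both uniformly bounded in $h$, with $\pi_h^k\circ i_h^k=\mathrm{id}_{V_h^k}$. Let $f\in W^k$ and $f_h\in W_h^k$. Suppose $(\sigma_h,u_h,p_h)\in V_h^{k-1}\times V_h^k\times\mathfrak H_h^k$ solves \[\begin{aligned}\langle\sigma_h,\tau_h\rangle_h-\langle u_h,\mathrm d_h\tau_h\rangle_h&=0&&\forall\tau_h\in V_h^{k-1},\\ \langle\mathrm d_h\sigma_h,v_h\rangle_h+\langle\mathrm d_hu_h,\mathrm d_hv_h\rangle_h+\langle p_h,v_h\rangle_h&=\langle f_h,v_h\rangle_h&&\forall v_h\in V_h^k,\\ \langle u_h,q_h\rangle_h&=0&&\forall q_h\in\mathfrak H_h^k,\end{aligned}\] and $(\sigma_h',u_h',p_h')\in V_h^{k-1}\times V_h^k\times\mathfrak H_h'^k$ solves \[\begin{aligned}\langle J_h\sigma_h',\tau_h\rangle_h-\langle J_hu_h',\mathrm d_h\tau_h\rangle_h&=0&&\forall\tau_h\in V_h^{k-1},\\ \langle J_h\mathrm d_h\sigma_h',v_h\rangle_h+\langle J_h\mathrm d_hu_h',\mathrm d_hv_h\rangle_h+\langle J_hp_h',v_h\rangle_h&=\langle i_h^*f,v_h\rangle_h&&\forall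 v_h\in V_h^k,\\ \langle J_hu_h',q_h'\rangle_h&=0&&\forall q_h'\in\mathfrak H_h'^k.\end{aligned}\] Then there is a constant $C$, independent of $h$, $f$ and $f_h$, such that \[\|\sigma_h-\sigma_h'\|_{V_h}+\|u_h-u_h'\|_{V_h}+\|p_h-p_h'\|_h\le C\big(\|f_h-i_h^*f\|_h+\|I-J_h\|\,\|f\|\big).\]
   Context: A Hilbert complex $(W,\mathrm d)$ is a sequence of Hilbert spaces $W^k$ with closed densely defined linear maps $\mathrm d^k\colon V^k\subset W^k\to V^{k+1}\subset W^{k+1}$, $\mathrm d^k\circ\mathrm d^{k-1}=0$; closed if each $\mathrm d^kV^k$ is closed. The domain complex $(V,\mathrm d)$ has the graph inner product $\langle u,v\rangle_V=\langle u,v\rangle+\langle\mathrm du,\mathrm dv\rangle$. Morphisms are sequences of bounded linear maps commuting with differentials. $\langle\cdot,\cdot\rangle,\|\cdot\|$ denote $W$ inner product/norm; $\langle\cdot,\cdot\rangle_h,\|\cdot\|_h$ those of $W_h$. $i_h^*\colon W^k\to W_h^k$ is the Hilbert adjoint of $i_h^k\colon W_h^k\to W^k$, and $J_h=i_h^*i_h\colon W_h^k\to W_h^k$; $\|I-J_h\|$ is its operator norm on $W_h^k$ (in the relevant degree). $\mathfrak Z_h^k=\ker\mathrm d_h^k$, $\mathfrak B_h^k=\mathrm d_hV_h^{k-1}$, $\mathfrak H_h^k=\mathfrak Z_h^k\cap(\mathfrak B_h^k)^\perp$ ($W_h$-orthogonal complement), and the modified harmonic space is $\mathfrak H_h'^k=\{z\in\mathfrak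 Z_h^k:\langle i_hz,i_hb\rangle=0\ \forall b\in\mathfrak B_h^k\}$. *)

theory Defs
  imports "HOL-Analysis.Analysis"
begin

text \<open>Hilbert complexes are modelled with all degrees (indexed by int) living as
closed subspaces W k of one ambient real Hilbert space (type class
real_inner + complete_space); the inner product of W k is the ambient one.
V k is the domain of the closed densely defined operator d k.\<close>

definition lin_on :: "'a::real_vector set \<Rightarrow> ('a \<Rightarrow> 'b::real_vector) \<Rightarrow> bool" where
  "lin_on S f \<longleftrightarrow> (\<forall>x\<in>S. \<forall>y\<in>S. f (x + y) = f x + f y) \<and> (\<forall>c. \<forall>x\<in>S. f (c *\<^sub>R x) = c *\<^sub>R f x)"

definition hilbert_complex ::
  "(int \<Rightarrow> 'a::{real_inner,complete_space} set) \<Rightarrow> (int \<Rightarrow> 'a set) \<Rightarrow> (int \<Rightarrow> 'a \<Rightarrow> 'a) \<Rightarrow> bool" where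
  "hilbert_complex W V d \<longleftrightarrow> (\<forall>k.
     subspace (W k) \<and> closed (W k) \<and>
     subspace (V k) \<and> V k \<subseteq> W k \<and> W k \<subseteq> closure (V k) \<and>
     lin_on (V k) (d k) \<and>
     d k ` V k \<subseteq> V (k + 1) \<and>
     closed ((\<lambda>x. (x, d k x)) ` V k) \<and>
     (\<forall>x\<in>V k. d (k + 1) (d k x) = 0))"

definition closed_hilbert_complex ::
  "(int \<Rightarrow> 'a::{real_inner,complete_space} set) \<Rightarrow> (int \<Rightarrow> 'a set) \<Rightarrow> (int \<Rightarrow> 'a \<Rightarrow> 'a) \<Rightarrow> bool" where
  "closed_hilbert_complex W V d \<longleftrightarrow> hilbert_complex W V d \<and> (\<forall>k. closed (d k ` V k))"

definition vnorm :: "(int \<Rightarrow> 'a::real_normed_vector \<Rightarrow> 'a) \<Rightarrow> int \<Rightarrow> 'a \<Rightarrow> real" where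
  "vnorm d k x = sqrt ((norm x)\<^sup>2 + (norm (d k x))\<^sup>2)"

definition hadj :: "'v::real_inner set \<Rightarrow> ('v \<Rightarrow> 'w::real_inner) \<Rightarrow> 'w \<Rightarrow> 'v" where
  "hadj T g w = (THE y. y \<in> T \<and> (\<forall>x\<in>T. inner y x = inner w (g x)))"

definition Jop :: "(int \<Rightarrow> 'v::real_inner set) \<Rightarrow> (int \<Rightarrow> 'v \<Rightarrow> 'w::real_inner) \<Rightarrow> int \<Rightarrow> 'v \<Rightarrow> 'v" where
  "Jop Wh i j x = hadj (Wh j) (i j) (i j x)"

definition opnorm_on :: "'a::real_normed_vector set \<Rightarrow> ('a \<Rightarrow> 'b::real_normed_vector) \<Rightarrow> real" where
  "opnorm_on S f = (SUP x\<in>{x\<in>S. norm x \<le> 1}. norm (f x))"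

definition harmonic_sp :: "(int \<Rightarrow> 'a::real_inner set) \<Rightarrow> (int \<Rightarrow> 'a \<Rightarrow> 'a) \<Rightarrow> int \<Rightarrow> 'a set" where
  "harmonic_sp V d k = {z\<in>V k. d k z = 0 \<and> (\<forall>b\<in>d (k - 1) ` V (k - 1). inner z b = 0)}"

definition harmonic_sp' :: "(int \<Rightarrow> 'v::real_inner set) \<Rightarrow> (int \<Rightarrow> 'v \<Rightarrow> 'v) \<Rightarrow> (int \<Rightarrow> 'v \<Rightarrow> 'w::real_inner) \<Rightarrow> int \<Rightarrow> 'v set" where
  "harmonic_sp' V d i k = {z\<in>V k. d k z = 0 \<and> (\<forall>b\<in>d (k - 1) ` V (k - 1). inner (i k z) (i k b) = 0)}"

end

theory Submission
  imports Defs
begin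

text \<open>The modified problem differs from the Galerkin problem only in that the inner products of
  V_h are replaced by the ones pulled back along i_h, i.e. by \<langle>J_h x, y\<rangle>_h. Testing both problems
  with the components of the error in the discrete Hodge decomposition bounds every component by
  the data error \<parallel>f_h - i_h^* f\<parallel> plus defects \<langle>(I - J_h) x, y\<rangle>_h, where x is a component of the
  modified solution. The modified problem is stable uniformly in h: since \<pi>_h i_h = id with \<pi>_h
  bounded, i_h is bounded below on cycles, and \<pi>_h transfers the Poincare inequality of the
  continuous complex, which holds because d has closed range (open mapping argument via Baire
  category). Hence the defects are bounded by \<parallel>I - J_h\<parallel> \<parallel>f\<parallel>.\<close>

lemma le_of_square_le:
  fixes x a :: real assumes "x * x \<le> a * x" "0 \<le> a" "0 \<le> x" shows "x \<le> a"
  using assms by (cases "x = 0") (auto simp: mult_le_cancel_right)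

lemma norm_mult_norm_eq_inner: "norm x * norm x = inner x (x::'a::real_inner)"
  by (metis power2_eq_square power2_norm_eq_inner)

lemma inner_le_bound:
  fixes x y :: "'a::real_inner"
  assumes "norm x \<le> X" shows "inner x y \<le> X * norm y" "- inner x y \<le> X * norm y"
  using norm_cauchy_schwarz[of x y] Cauchy_Schwarz_ineq2[of x y]
    mult_right_mono[OF assms norm_ge_zero[of y]] by linarith+

lemma norm_le_if_inner_self_eq:
  fixes x y :: "'a::real_inner"
  assumes "inner x x = inner y x" shows "norm x \<le> norm y"
proof (rule le_of_square_le)
  show "norm x * norm x \<le> norm y * norm x"
    using assms norm_cauchy_schwarz[of y x] by (simp add: norm_mult_norm_eq_inner)
qed simp_all

lemma power_mono_factor:
  fixes G X :: real assumes "1 \<le> G" "a \<le> b" "0 \<le> X" shows "G^a * X \<le> G^b * X"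
  using assms by (intro mult_right_mono power_increasing) auto

lemma lin_on_zero: assumes "subspace S" "lin_on S f" shows "f 0 = 0"
proof -
  have "f (0 *\<^sub>R 0) = 0 *\<^sub>R f 0" using assms subspace_0 unfolding lin_on_def by blast
  then show ?thesis by simp
qed

lemma lin_on_add: "lin_on S f \<Longrightarrow> x \<in> S \<Longrightarrow> y \<in> S \<Longrightarrow> f (x + y) = f x + f y"
  unfolding lin_on_def by blast

lemma lin_on_scaleR: "lin_on S f \<Longrightarrow> x \<in> S \<Longrightarrow> f (c *\<^sub>R x) = c *\<^sub>R f x"
  unfolding lin_on_def by blast

lemma lin_on_diff:
  assumes "subspace S" "lin_on S f" "x \<in> S" "y \<in> S"
  shows "f (x - y) = f x - f y"
proof -
  have "(-1) *\<^sub>R y \<in> S" using assms subspace_scale by blast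
  then have "f (x + (-1) *\<^sub>R y) = f x + (-1) *\<^sub>R f y"
    using lin_on_add[OF assms(2,3)] lin_on_scaleR[OF assms(2,4)] by presburger
  then show ?thesis by simp
qed

lemma lin_on_subset: "lin_on S f \<Longrightarrow> T \<subseteq> S \<Longrightarrow> lin_on T f"
  unfolding lin_on_def by blast

lemma subspace_lin_on_image:
  assumes "subspace S" "lin_on S f" shows "subspace (f ` S)"
  unfolding subspace_def
proof (intro conjI ballI allI)
  show "0 \<in> f ` S" using lin_on_zero[OF assms] subspace_0[OF assms(1)] by (metis image_eqI)
next
  fix c x y assume "x \<in> f ` S" "y \<in> f ` S"
  then obtain a b where ab: "a \<in> S" "b \<in> S" "x = f a" "y = f b" by auto
  then have "x + y = f (a + b)" "c *\<^sub>R x = f (c *\<^sub>R a)"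
    using lin_on_add[OF assms(2)] lin_on_scaleR[OF assms(2)] by auto
  then show "x + y \<in> f ` S" "c *\<^sub>R x \<in> f ` S"
    using ab assms(1) subspace_add subspace_scale by (metis image_eqI)+
qed

lemma lin_on_continuous_on:
  assumes "subspace S" "lin_on S g" "\<And>x. x \<in> S \<Longrightarrow> norm (g x) \<le> K * norm x"
  shows "continuous_on S g"
proof (rule lipschitz_on_continuous_on[of "\<bar>K\<bar>"], rule lipschitz_onI)
  fix x y assume "x \<in> S" "y \<in> S"
  then have "norm (g (x - y)) \<le> K * norm (x - y)" using assms subspace_diff by blast
  also have "\<dots> \<le> \<bar>K\<bar> * norm (x - y)" by (intro mult_right_mono) auto
  finally show "dist (g x) (g y) \<le> \<bar>K\<bar> * dist x y"
    using lin_on_diff[OF assms(1,2) \<open>x \<in> S\<close> \<open>y \<in> S\<close>] by (simp add: dist_norm)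
qed auto

section \<open>Orthogonal projections and adjoints\<close>

text \<open>The parallelogram law at the midpoint of a and b, which lies in S.\<close>
lemma parallelogram_near_points:
  fixes S :: "'a::real_inner set"
  assumes sub: "subspace S" and D: "0 \<le> D" "\<And>s. s \<in> S \<Longrightarrow> D \<le> norm (x - s)"
    and ab: "a \<in> S" "b \<in> S"
  shows "norm (a - b)^2 \<le> 2 * (norm (x - a)^2 - D^2) + 2 * (norm (x - b)^2 - D^2)"
proof -
  have "(1/2) *\<^sub>R (a + b) \<in> S" using ab sub by (simp add: subspace_add subspace_scale)
  then have "D \<le> norm (x - (1/2) *\<^sub>R (a + b))" by (rule D(2))
  also have "x - (1/2) *\<^sub>R (a + b) = (1/2) *\<^sub>R ((x - a) + (x - b))"
    by (simp add: algebra_simps flip: scaleR_add_left)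
  finally have "2 * D \<le> norm ((x - a) + (x - b))" by simp
  then have "(2 * D)^2 \<le> norm ((x - a) + (x - b))^2" using D(1) by (intro power_mono) auto
  moreover have "norm (a - b)^2 + norm ((x - a) + (x - b))^2 = 2 * norm (x - a)^2 + 2 * norm (x - b)^2"
    by (simp add: power2_norm_eq_inner inner_diff_left inner_diff_right inner_add_left
        inner_add_right inner_commute algebra_simps)
  ultimately show ?thesis by (simp add: power_mult_distrib)
qed

lemma closed_subspace_nearest_point:
  fixes S :: "'a::{real_inner,complete_space} set"
  assumes sub: "subspace S" and cl: "closed S"
  obtains y where "y \<in> S" "\<And>s. s \<in> S \<Longrightarrow> norm (x - y) \<le> norm (x - s)"
proof -
  define D where "D = infdist x S"
  define \<epsilon> :: "nat \<Rightarrow> real" where "\<epsilon> n = inverse (Suc n)" for n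
  have D0: "0 \<le> D" unfolding D_def by (rule infdist_nonneg)
  have Dle: "D \<le> norm (x - s)" if "s \<in> S" for s
    unfolding D_def using infdist_le[OF that, of x] by (simp add: dist_norm)
  have "\<exists>s\<in>S. norm (x - s) < D + \<epsilon> n" for n
  proof -
    have ne: "S \<noteq> {}" using subspace_0[OF sub] by auto
    have "(INF s\<in>S. dist x s) < D + \<epsilon> n" using infdist_notempty[OF ne] by (simp add: D_def \<epsilon>_def)
    then obtain s where "s \<in> S" "dist x s < D + \<epsilon> n"
      using cINF_less_iff[of S "\<lambda>s. dist x s"] ne by (auto intro: bdd_belowI2[where m=0])
    then show ?thesis by (auto simp: dist_norm)
  qed
  then obtain s where sS: "\<And>n. s n \<in> S" and sn: "\<And>n. norm (x - s n) < D + \<epsilon> n"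
    by metis
  define \<delta> where "\<delta> n = (D + \<epsilon> n)^2 - D^2" for n
  have \<delta>0: "\<delta> \<longlonglongrightarrow> 0"
  proof -
    have "(\<lambda>n. (D + \<epsilon> n)^2 - D^2) \<longlonglongrightarrow> D^2 - D^2"
      unfolding \<epsilon>_def by (intro tendsto_intros LIMSEQ_inverse_real_of_nat_add)
    then show ?thesis by (simp add: \<delta>_def [abs_def])
  qed
  have sq: "norm (x - s n)^2 - D^2 \<le> \<delta> n" for n
    using sn[of n] unfolding \<delta>_def by (smt (verit) norm_ge_zero power_mono)
  have "Cauchy s"
  proof (rule CauchyI)
    fix e :: real assume "e > 0"
    then have "eventually (\<lambda>n. \<delta> n < e^2 / 4) sequentially"
      using \<delta>0 by (intro order_tendstoD(2)) auto
    then obtain N where N: "\<And>n. n \<ge> N \<Longrightarrow> \<delta> n < e^2 / 4" by (auto simp: eventually_sequentially)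
    have "norm (s m - s n) < e" if "m \<ge> N" "n \<ge> N" for m n
    proof -
      have "norm (s m - s n)^2 \<le> 2 * (norm (x - s m)^2 - D^2) + 2 * (norm (x - s n)^2 - D^2)"
        by (rule parallelogram_near_points[OF sub D0 _ sS sS]) (rule Dle)
      also have "\<dots> \<le> 2 * \<delta> m + 2 * \<delta> n" by (intro add_mono mult_left_mono sq) simp_all
      also have "\<dots> < e^2" using N[OF that(1)] N[OF that(2)] by linarith
      finally have "norm (s m - s n)^2 < e^2" .
      then show ?thesis using \<open>e > 0\<close> by (simp add: power_less_imp_less_base)
    qed
    then show "\<exists>M. \<forall>m\<ge>M. \<forall>n\<ge>M. norm (s m - s n) < e" by blast
  qed
  then obtain y where ly: "s \<longlonglongrightarrow> y" using convergent_eq_Cauchy by blast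
  have "y \<in> S" using closed_sequentially[OF cl] sS ly by blast
  moreover have "norm (x - y) \<le> D"
  proof (rule LIMSEQ_le)
    show "(\<lambda>n. norm (x - s n)) \<longlonglongrightarrow> norm (x - y)" by (intro tendsto_intros ly)
    show "(\<lambda>n. D + \<epsilon> n) \<longlonglongrightarrow> D" unfolding \<epsilon>_def by (rule LIMSEQ_inverse_real_of_nat_add)
  qed (use sn less_imp_le in blast)
  ultimately show ?thesis using Dle that by (meson order_trans)
qed

lemma norm_diff_scaleR_squared:
  fixes v t :: "'a::real_inner"
  shows "norm (v - a *\<^sub>R t)^2 = norm v^2 - 2 * a * inner v t + a^2 * (norm t)^2"
proof -
  have "norm (v - a *\<^sub>R t)^2 = inner (v - a *\<^sub>R t) (v - a *\<^sub>R t)" by (rule power2_norm_eq_inner)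
  also have "\<dots> = inner v v - 2 * a * inner v t + a^2 * inner t t"
    by (simp add: inner_diff_left inner_diff_right inner_commute power2_eq_square algebra_simps)
  finally show ?thesis by (simp add: power2_norm_eq_inner)
qed

lemma nearest_point_orthogonal:
  fixes S :: "'a::real_inner set"
  assumes sub: "subspace S" and y: "y \<in> S" and near: "\<And>s. s \<in> S \<Longrightarrow> norm (x - y) \<le> norm (x - s)"
    and t: "t \<in> S"
  shows "inner (x - y) t = 0"
proof (cases "t = 0")
  case False
  define a where "a = inner (x - y) t / (norm t)^2"
  have "y + a *\<^sub>R t \<in> S" using sub y t by (simp add: subspace_add subspace_scale)
  then have "norm (x - y)^2 \<le> norm ((x - y) - a *\<^sub>R t)^2"
    using near by (metis diff_diff_eq norm_ge_zero power_mono)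
  also have "\<dots> = norm (x - y)^2 - 2 * a * inner (x - y) t + a^2 * (norm t)^2"
    by (rule norm_diff_scaleR_squared)
  also have "a^2 * (norm t)^2 = a * inner (x - y) t"
    using False by (simp add: a_def power2_eq_square)
  finally have "(inner (x - y) t)^2 / (norm t)^2 \<le> 0"
    by (simp add: a_def power2_eq_square)
  then show ?thesis using False by (simp add: divide_le_0_iff)
qed simp

lemma orthogonal_projection_exists:
  fixes S :: "'a::{real_inner,complete_space} set"
  assumes "subspace S" "closed S"
  shows "\<exists>y\<in>S. \<forall>s\<in>S. inner (x - y) s = 0"
  using closed_subspace_nearest_point[OF assms] nearest_point_orthogonal[OF assms(1)] by metis

lemma riesz_representation:
  fixes T :: "'v::{real_inner,complete_space} set" and g :: "'v \<Rightarrow> 'w::real_inner"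
  assumes sub: "subspace T" and cl: "closed T" and lin: "lin_on T g"
    and bdd: "\<And>x. x \<in> T \<Longrightarrow> norm (g x) \<le> K * norm x"
  shows "\<exists>y\<in>T. \<forall>x\<in>T. inner y x = inner w (g x)"
proof -
  define \<phi> where "\<phi> x = inner w (g x)" for x
  have \<phi>_add: "\<phi> (a + b) = \<phi> a + \<phi> b" and \<phi>_diff: "\<phi> (a - b) = \<phi> a - \<phi> b"
    and \<phi>_scale: "\<phi> (c *\<^sub>R a) = c * \<phi> a" if "a \<in> T" "b \<in> T" for a b c
    using lin_on_add[OF lin that] lin_on_diff[OF sub lin that] lin_on_scaleR[OF lin that(1)]
    unfolding \<phi>_def by (auto simp: inner_add_right inner_diff_right)
  show ?thesis
  proof (cases "\<forall>x\<in>T. \<phi> x = 0")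
    case True
    then show ?thesis using subspace_0[OF sub] unfolding \<phi>_def by (intro bexI[of _ 0]) auto
  next
    case False
    then obtain x0 where x0: "x0 \<in> T" "\<phi> x0 \<noteq> 0" by blast
    define N where "N = T \<inter> \<phi> -` {0}"
    have "continuous_on T \<phi>" unfolding \<phi>_def
      by (intro continuous_on_inner continuous_on_const lin_on_continuous_on[OF sub lin bdd])
    then have clN: "closed N" unfolding N_def by (rule continuous_closed_preimage[OF _ cl]) auto
    have subN: "subspace N" unfolding subspace_def N_def
      using sub \<phi>_add \<phi>_scale \<phi>_diff[of 0 0] subspace_0[OF sub]
      by (auto simp: subspace_add subspace_scale)
    obtain n0 where n0: "n0 \<in> N" "\<forall>n\<in>N. inner (x0 - n0) n = 0"
      using orthogonal_projection_exists[OF subN clN] by blast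
    \<comment> \<open>z is orthogonal to the kernel N of \<phi>, so \<phi> is represented by a multiple of z.\<close>
    define z where "z = x0 - n0"
    have zT: "z \<in> T" using n0 x0 sub unfolding z_def N_def by (auto intro: subspace_diff)
    have \<phi>z: "\<phi> z = \<phi> x0" using \<phi>_diff[OF x0(1), of n0] n0 unfolding z_def N_def by auto
    have z0: "inner z z \<noteq> 0" using \<phi>z x0 \<phi>_diff[OF zT zT] by auto
    show ?thesis
    proof (intro bexI[of _ "(\<phi> z / inner z z) *\<^sub>R z"] ballI)
      fix x assume xT: "x \<in> T"
      define m where "m = x - (\<phi> x / \<phi> z) *\<^sub>R z"
      have "(\<phi> x / \<phi> z) *\<^sub>R z \<in> T" using zT sub by (simp add: subspace_scale)
      then have "m \<in> N" using \<phi>_diff[OF xT] \<phi>_scale[OF zT zT] \<phi>z x0 xT sub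
        unfolding m_def N_def by (simp add: subspace_diff)
      then have "inner z m = 0" using n0 unfolding z_def by blast
      then have "inner z x = (\<phi> x / \<phi> z) * inner z z" unfolding m_def by (simp add: inner_diff_right)
      then show "inner ((\<phi> z / inner z z) *\<^sub>R z) x = inner w (g x)"
        using z0 \<phi>z x0 unfolding \<phi>_def by simp
    qed (use zT sub subspace_scale in blast)
  qed
qed

lemma opnorm_on_le:
  fixes T :: "'a::real_normed_vector set" and f :: "'a \<Rightarrow> 'b::real_normed_vector"
  assumes sub: "subspace T" and scale: "\<And>x c. x \<in> T \<Longrightarrow> f (c *\<^sub>R x) = c *\<^sub>R f x"
    and bdd: "\<And>x. x \<in> T \<Longrightarrow> norm (f x) \<le> B * norm x"
  shows "\<And>x. x \<in> T \<Longrightarrow> norm (f x) \<le> opnorm_on T f * norm x" and "0 \<le> opnorm_on T f"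
proof -
  define S where "S = {x\<in>T. norm x \<le> 1}"
  have f0: "f 0 = 0" using scale[OF subspace_0[OF sub], of 0] by simp
  have "bdd_above ((\<lambda>x. norm (f x)) ` S)"
  proof (rule bdd_aboveI2)
    fix x assume "x \<in> S"
    then have "norm (f x) \<le> B * norm x" "norm x \<le> 1" using bdd unfolding S_def by auto
    then show "norm (f x) \<le> \<bar>B\<bar>" by (smt (verit) mult_left_le norm_ge_zero mult_right_mono)
  qed
  then have up: "norm (f x) \<le> opnorm_on T f" if "x \<in> S" for x
    unfolding opnorm_on_def S_def[symmetric] using cSUP_upper[OF that] by blast
  show "0 \<le> opnorm_on T f" using up[of 0] subspace_0[OF sub] f0 unfolding S_def by simp
  show "norm (f x) \<le> opnorm_on T f * norm x" if x: "x \<in> T" for x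
  proof (cases "x = 0")
    case False
    have "(1 / norm x) *\<^sub>R x \<in> S" unfolding S_def using x sub subspace_scale False by auto
    then have "norm (f x) / norm x \<le> opnorm_on T f" using up scale[OF x] by fastforce
    then show ?thesis using False by (simp add: divide_le_eq)
  qed (simp add: f0)
qed

locale bounded_lin_on =
  fixes T :: "'v::{real_inner,complete_space} set" and g :: "'v \<Rightarrow> 'w::real_inner" and K :: real
  assumes subspace: "subspace T" and closed: "closed T" and lin: "lin_on T g"
    and bounded: "\<And>x. x \<in> T \<Longrightarrow> norm (g x) \<le> K * norm x"
begin

lemma hadj_eqI:
  assumes "y \<in> T" "\<And>x. x \<in> T \<Longrightarrow> inner y x = inner w (g x)"
  shows "hadj T g w = y"
  unfolding hadj_def
proof (rule the_equality)
  fix y' assume y': "y' \<in> T \<and> (\<forall>x\<in>T. inner y' x = inner w (g x))"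
  then have "y' - y \<in> T" using assms subspace subspace_diff by blast
  then have "inner (y' - y) (y' - y) = 0" using y' assms by (simp add: inner_diff_left)
  then show "y' = y" by simp
qed (use assms in blast)

lemma hadj_mem: "hadj T g w \<in> T"
  and inner_hadj: "x \<in> T \<Longrightarrow> inner (hadj T g w) x = inner w (g x)"
proof -
  obtain y where "y \<in> T" "\<forall>x\<in>T. inner y x = inner w (g x)"
    using riesz_representation[OF subspace closed lin bounded] by blast
  then show "hadj T g w \<in> T" "x \<in> T \<Longrightarrow> inner (hadj T g w) x = inner w (g x)"
    using hadj_eqI by auto
qed

lemma hadj_gram_scaleR:
  assumes "x \<in> T" shows "hadj T g (g (c *\<^sub>R x)) = c *\<^sub>R hadj T g (g x)"
  using hadj_mem subspace subspace_scale lin_on_scaleR[OF lin assms] inner_hadj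
  by (intro hadj_eqI) auto

lemma norm_hadj_gram_le:
  assumes x: "x \<in> T" shows "norm (hadj T g (g x)) \<le> K^2 * norm x"
proof (rule le_of_square_le)
  let ?J = "hadj T g (g x)"
  have "norm ?J * norm ?J = inner (g x) (g ?J)"
    using inner_hadj[OF hadj_mem] by (simp add: norm_mult_norm_eq_inner)
  also have "\<dots> \<le> norm (g x) * norm (g ?J)" by (rule norm_cauchy_schwarz)
  also have "\<dots> \<le> (K * norm x) * (K * norm ?J)"
    using bounded x hadj_mem by (intro mult_mono) (auto intro: order_trans[OF norm_ge_zero])
  finally show "norm ?J * norm ?J \<le> K^2 * norm x * norm ?J"
    by (simp add: power2_eq_square algebra_simps)
qed (use bounded[OF x] order_trans[OF norm_ge_zero] in auto)

lemma inner_pullback_defect: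
  assumes x: "x \<in> T" and y: "y \<in> T"
  shows "\<bar>inner x y - inner (g x) (g y)\<bar> \<le> opnorm_on T (\<lambda>x. x - hadj T g (g x)) * norm x * norm y"
    and "0 \<le> opnorm_on T (\<lambda>x. x - hadj T g (g x))"
proof -
  have scale: "\<And>x c. x \<in> T \<Longrightarrow> (\<lambda>x. x - hadj T g (g x)) (c *\<^sub>R x) = c *\<^sub>R (x - hadj T g (g x))"
    using hadj_gram_scaleR by (simp add: scaleR_diff_right)
  have bdd: "norm (x - hadj T g (g x)) \<le> (1 + K^2) * norm x" if "x \<in> T" for x
    using norm_hadj_gram_le[OF that] norm_triangle_ineq4[of x "hadj T g (g x)"]
    by (simp add: algebra_simps)
  have op: "norm (x - hadj T g (g x)) \<le> opnorm_on T (\<lambda>x. x - hadj T g (g x)) * norm x"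
    "0 \<le> opnorm_on T (\<lambda>x. x - hadj T g (g x))"
    using opnorm_on_le[of T "\<lambda>x. x - hadj T g (g x)", OF subspace scale bdd] x by auto
  have "\<bar>inner x y - inner (g x) (g y)\<bar> = \<bar>inner (x - hadj T g (g x)) y\<bar>"
    using inner_hadj[OF y] by (simp add: inner_diff_left)
  also have "\<dots> \<le> norm (x - hadj T g (g x)) * norm y" by (rule Cauchy_Schwarz_ineq2)
  also have "\<dots> \<le> opnorm_on T (\<lambda>x. x - hadj T g (g x)) * norm x * norm y"
    using op(1) by (intro mult_right_mono) auto
  finally show "\<bar>inner x y - inner (g x) (g y)\<bar> \<le> opnorm_on T (\<lambda>x. x - hadj T g (g x)) * norm x * norm y" .
  show "0 \<le> opnorm_on T (\<lambda>x. x - hadj T g (g x))" by (rule op(2))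
qed

end

section \<open>Closed range and Poincare's inequality\<close>

definition poincare_constant :: "'a::real_normed_vector set \<Rightarrow> ('a \<Rightarrow> 'b::real_normed_vector) \<Rightarrow> real \<Rightarrow> bool"
  where "poincare_constant Vs D c \<longleftrightarrow> (\<forall>y\<in>Vs. \<exists>z\<in>Vs. D z = 0 \<and> norm (y - z) \<le> c * norm (D y))"

lemma closed_range_baire_ball:
  fixes Vs :: "'a::{real_inner,complete_space} set" and D :: "'a \<Rightarrow> 'a"
  assumes sub: "subspace Vs" and lin: "lin_on Vs D" and clB: "closed (D ` Vs)"
  obtains n :: nat and b0 e where "e > 0" "b0 \<in> D ` Vs"
    "\<And>b. b \<in> D ` Vs \<Longrightarrow> dist b b0 < e \<Longrightarrow> b \<in> closure (D ` {x\<in>Vs. norm x \<le> real n})"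
proof -
  define B where "B = D ` Vs"
  define A where "A n = closure (D ` {x\<in>Vs. norm x \<le> real n})" for n :: nat
  define X where "X = top_of_set B"
  have AB: "A n \<subseteq> B" for n
  proof -
    have "A n \<subseteq> closure B" unfolding A_def B_def by (rule closure_mono) blast
    then show ?thesis using closure_closed[OF clB] unfolding B_def by simp
  qed
  have UA: "\<Union> (range A) = B"
  proof (intro equalityI subsetI)
    fix b assume "b \<in> B"
    then obtain x where x: "x \<in> Vs" "b = D x" unfolding B_def by (rule imageE) simp
    obtain n :: nat where "norm x \<le> real n" using real_arch_simple by blast
    then have "b \<in> D ` {x\<in>Vs. norm x \<le> real n}" using x by blast
    then have "b \<in> A n" unfolding A_def by (rule closure_subset[THEN subsetD])
    then show "b \<in> \<Union> (range A)" by blast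
  qed (use AB in blast)
  have nonempty: "X interior_of \<Union> (range A) \<noteq> {}"
  proof -
    have "0 \<in> B"
      unfolding B_def by (rule image_eqI[where x=0]) (use lin_on_zero[OF sub lin] subspace_0[OF sub] in auto)
    moreover have "X interior_of \<Union> (range A) = B"
      using UA interior_of_topspace[of X] by (simp add: X_def)
    ultimately show ?thesis by blast
  qed
  have cm: "completely_metrizable_space X" unfolding X_def
    by (rule completely_metrizable_space_closedin[OF completely_metrizable_space_euclidean])
      (use clB in \<open>unfold B_def closed_closedin\<close>)
  have "\<exists>n. X interior_of A n \<noteq> {}"
  proof (rule ccontr)
    assume no_interior: "\<nexists>n. X interior_of A n \<noteq> {}"
    have "X interior_of \<Union> (range A) = {}"
    proof (rule Baire_category_alt)
      fix T assume "T \<in> range A"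
      then obtain n where "T = A n" by blast
      moreover have "closedin X (A n)" unfolding X_def by (rule closed_subset[OF AB]) (simp add: A_def)
      ultimately show "closedin X T \<and> X interior_of T = {}" using no_interior by blast
    qed (use cm in auto)
    then show False using nonempty by contradiction
  qed
  then obtain n b0 U where U: "openin X U" "b0 \<in> U" "U \<subseteq> A n" unfolding interior_of_def by blast
  then obtain e where e: "e > 0" "\<And>b. b \<in> B \<Longrightarrow> dist b b0 < e \<Longrightarrow> b \<in> U"
    unfolding X_def openin_euclidean_subtopology_iff by blast
  show ?thesis
  proof (rule that[OF e(1)])
    show "b0 \<in> D ` Vs" using U AB unfolding B_def by blast
    show "b \<in> closure (D ` {x\<in>Vs. norm x \<le> real n})" if "b \<in> D ` Vs" "dist b b0 < e" for b
      using e(2) that U(3) unfolding A_def B_def by blast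
  qed
qed

text \<open>Baire category gives a ball around some b0 in which the images of a bounded set are dense;
  translating it to the origin costs a factor 2 in the bound M.\<close>
lemma closed_range_lift_near_zero:
  fixes Vs :: "'a::{real_inner,complete_space} set" and D :: "'a \<Rightarrow> 'a"
  assumes sub: "subspace Vs" and lin: "lin_on Vs D" and clB: "closed (D ` Vs)"
  obtains M e where "0 \<le> M" "0 < e"
    "\<And>b \<eta>. b \<in> D ` Vs \<Longrightarrow> norm b < e \<Longrightarrow> 0 < \<eta> \<Longrightarrow> \<exists>x\<in>Vs. norm x \<le> M \<and> norm (D x - b) < \<eta>"
proof -
  obtain n :: nat and b0 e where e: "e > 0" and b0: "b0 \<in> D ` Vs"
    and dense: "\<And>b. b \<in> D ` Vs \<Longrightarrow> dist b b0 < e \<Longrightarrow> b \<in> closure (D ` {x\<in>Vs. norm x \<le> real n})"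
    by (rule closed_range_baire_ball[OF sub lin clB]) blast
  have "\<exists>x\<in>Vs. norm x \<le> 2 * real n \<and> norm (D x - b) < \<eta>"
    if bB: "b \<in> D ` Vs" and bn: "norm b < e" and eta: "\<eta> > 0" for b \<eta>
  proof -
    have "b0 + b \<in> closure (D ` {x\<in>Vs. norm x \<le> real n})"
      using dense subspace_add[OF subspace_lin_on_image[OF sub lin] b0 bB] bn by (simp add: dist_norm)
    moreover have "b0 \<in> closure (D ` {x\<in>Vs. norm x \<le> real n})" using dense[OF b0] e by simp
    ultimately obtain y1 y2 where "y1 \<in> D ` {x\<in>Vs. norm x \<le> real n}" "dist y1 (b0 + b) < \<eta>/2"
      "y2 \<in> D ` {x\<in>Vs. norm x \<le> real n}" "dist y2 b0 < \<eta>/2"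
      using eta unfolding closure_approachable by (meson half_gt_zero)
    then obtain x1 x2 where x12: "x1 \<in> Vs" "norm x1 \<le> real n" "dist (D x1) (b0 + b) < \<eta>/2"
      "x2 \<in> Vs" "norm x2 \<le> real n" "dist (D x2) b0 < \<eta>/2"
      by blast
    have "D (x1 - x2) - b = (D x1 - (b0 + b)) - (D x2 - b0)"
      using lin_on_diff[OF sub lin x12(1,4)] by (simp add: algebra_simps)
    then have "norm (D (x1 - x2) - b) \<le> norm (D x1 - (b0 + b)) + norm (D x2 - b0)"
      by (metis norm_triangle_ineq4)
    then have "norm (D (x1 - x2) - b) < \<eta>" using x12 by (simp add: dist_norm)
    moreover have "norm (x1 - x2) \<le> 2 * real n" using x12 norm_triangle_ineq4[of x1 x2] by linarith
    ultimately show ?thesis using sub x12 subspace_diff by blast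
  qed
  then show ?thesis using that[of "2 * real n" e] e by simp
qed

lemma closed_range_half_lift:
  fixes Vs :: "'a::{real_inner,complete_space} set" and D :: "'a \<Rightarrow> 'a"
  assumes sub: "subspace Vs" and lin: "lin_on Vs D" and clB: "closed (D ` Vs)"
  obtains M where "M \<ge> 0"
    "\<And>b. b \<in> D ` Vs \<Longrightarrow> \<exists>x\<in>Vs. norm x \<le> M * norm b \<and> norm (D x - b) \<le> norm b / 2"
proof -
  obtain M e where M: "0 \<le> M" and e: "0 < e"
    and small: "\<And>b \<eta>. b \<in> D ` Vs \<Longrightarrow> norm b < e \<Longrightarrow> 0 < \<eta> \<Longrightarrow> \<exists>x\<in>Vs. norm x \<le> M \<and> norm (D x - b) < \<eta>"
    by (rule closed_range_lift_near_zero[OF sub lin clB]) blast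
  have "\<exists>x\<in>Vs. norm x \<le> 2 * M / e * norm b \<and> norm (D x - b) \<le> norm b / 2" if bB: "b \<in> D ` Vs" for b
  proof (cases "b = 0")
    case True
    then show ?thesis using subspace_0[OF sub] lin_on_zero[OF sub lin] by auto
  next
    case False
    define t where "t = e / (2 * norm b)"
    have t0: "t > 0" and tb: "t * norm b = e / 2" unfolding t_def using e False by auto
    then have "norm (t *\<^sub>R b) < e" using e by simp
    moreover have "t *\<^sub>R b \<in> D ` Vs" using subspace_scale[OF subspace_lin_on_image[OF sub lin] bB] .
    ultimately obtain x where x: "x \<in> Vs" "norm x \<le> M" "norm (D x - t *\<^sub>R b) < t * norm b / 2"
      using small[of "t *\<^sub>R b" "t * norm b / 2"] t0 False by auto
    have "(1/t) *\<^sub>R x \<in> Vs" using subspace_scale[OF sub x(1)] .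
    moreover have "norm ((1/t) *\<^sub>R x) \<le> 2 * M / e * norm b"
    proof -
      have "norm ((1/t) *\<^sub>R x) = norm x / t" using t0 by simp
      also have "\<dots> \<le> M / t" using x(2) t0 by (simp add: divide_right_mono)
      also have "\<dots> = 2 * M / e * norm b" using tb t0 e by (simp add: field_simps)
      finally show ?thesis .
    qed
    moreover have "norm (D ((1/t) *\<^sub>R x) - b) \<le> norm b / 2"
    proof -
      have "D ((1/t) *\<^sub>R x) - b = (1/t) *\<^sub>R (D x - t *\<^sub>R b)"
        using lin_on_scaleR[OF lin x(1)] t0 by (simp add: algebra_simps)
      then have "norm (D ((1/t) *\<^sub>R x) - b) = norm (D x - t *\<^sub>R b) / t" using t0 by simp
      also have "\<dots> \<le> norm b / 2" using x(3) t0 by (simp add: divide_le_eq mult.commute)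
      finally show ?thesis .
    qed
    ultimately show ?thesis by blast
  qed
  then show ?thesis using that[of "2 * M / e"] M e by simp
qed

lemma closed_graph_limit:
  assumes clG: "closed ((\<lambda>x. (x, D x)) ` Vs)" and "\<And>n. X n \<in> Vs"
    and "X \<longlonglongrightarrow> x" and "(\<lambda>n. D (X n)) \<longlonglongrightarrow> y"
  shows "x \<in> Vs" "D x = y"
proof -
  have "(\<lambda>n. (X n, D (X n))) \<longlonglongrightarrow> (x, y)" using assms(3,4) by (rule tendsto_Pair)
  moreover have "(X n, D (X n)) \<in> (\<lambda>x. (x, D x)) ` Vs" for n using assms(2) by simp
  ultimately have "(x, y) \<in> (\<lambda>x. (x, D x)) ` Vs" by (rule closed_sequentially[OF clG, rotated])
  then show "x \<in> Vs" "D x = y" by auto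
qed

lemma summable_norm_cancel_complete:
  fixes f :: "nat \<Rightarrow> 'a::{real_normed_vector,complete_space}"
  assumes "summable (\<lambda>n. norm (f n))"
  shows "summable f"
  unfolding summable_iff_convergent Cauchy_convergent_iff[symmetric]
proof (rule CauchyI)
  fix e :: real assume "e > 0"
  then obtain N where N: "\<And>m n. m \<ge> N \<Longrightarrow> norm (\<Sum>i=m..<n. norm (f i)) < e"
    using assms unfolding summable_Cauchy by blast
  have diff: "norm ((\<Sum>i<n. f i) - (\<Sum>i<m. f i)) < e" if "N \<le> m" "m \<le> n" for m n
  proof -
    have "(\<Sum>i<n. f i) - (\<Sum>i<m. f i) = (\<Sum>i=m..<n. f i)"
      using sum_diff_nat_ivl[OF _ that(2), of 0 f] by (simp add: atLeast0LessThan)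
    then show ?thesis
      using norm_sum[of f "{m..<n}"] N[OF that(1), of n] by (simp add: sum_nonneg)
  qed
  then have "norm ((\<Sum>i<m. f i) - (\<Sum>i<n. f i)) < e" if "N \<le> m" "N \<le> n" for m n
    using that diff[of m n] diff[of n m] norm_minus_commute[of "\<Sum>i<m. f i"]
    by (cases "m \<le> n") auto
  then show "\<exists>M. \<forall>m\<ge>M. \<forall>n\<ge>M. norm ((\<Sum>i<m. f i) - (\<Sum>i<n. f i)) < e" by blast
qed

lemma summable_geometric_bound:
  fixes a :: "nat \<Rightarrow> 'a::{real_normed_vector,complete_space}"
  assumes a: "\<And>i. norm (a i) \<le> C * (1/2)^i"
  shows "summable a" "norm (suminf a) \<le> 2 * C"
proof -
  have C: "0 \<le> C" using order_trans[OF norm_ge_zero a[of 0]] by simp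
  have geom: "summable (\<lambda>i. C * (1/2::real)^i)" by simp
  have "summable (\<lambda>i. norm (a i))"
    using summable_comparison_test'[OF geom, of 0 "\<lambda>i. norm (a i)"] a by simp
  then show sum_a: "summable a" by (rule summable_norm_cancel_complete)
  have "norm (\<Sum>i<n. a i) \<le> 2 * C" for n
  proof -
    have "norm (\<Sum>i<n. a i) \<le> (\<Sum>i<n. norm (a i))" by (rule norm_sum)
    also have "\<dots> \<le> (\<Sum>i<n. C * (1/2)^i)" by (rule sum_mono[OF a])
    also have "\<dots> \<le> (\<Sum>i. C * (1/2)^i)" by (rule sum_le_suminf[OF geom]) (use C in auto)
    also have "\<dots> = 2 * C" using suminf_mult[of "\<lambda>i. (1/2::real)^i"] suminf_geometric[of "1/2::real"] by simp
    finally show ?thesis .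
  qed
  then show "norm (suminf a) \<le> 2 * C"
    by (intro LIMSEQ_le_const2[OF tendsto_norm[OF summable_LIMSEQ[OF sum_a]]]) auto
qed

text \<open>Correcting an approximate lift again and again leaves residuals that halve at each step;
  the corrections form a geometric series whose sum lifts exactly.\<close>
lemma closed_range_exact_lift:
  fixes Vs :: "'a::{real_inner,complete_space} set" and D :: "'a \<Rightarrow> 'a"
  assumes sub: "subspace Vs" and lin: "lin_on Vs D" and clG: "closed ((\<lambda>x. (x, D x)) ` Vs)"
    and M: "M \<ge> 0"
    and half: "\<And>b. b \<in> D ` Vs \<Longrightarrow> \<exists>x\<in>Vs. norm x \<le> M * norm b \<and> norm (D x - b) \<le> norm b / 2"
    and bB: "b \<in> D ` Vs"
  shows "\<exists>x\<in>Vs. D x = b \<and> norm x \<le> 2 * M * norm b"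
proof -
  have "\<forall>c\<in>D ` Vs. \<exists>x. x \<in> Vs \<and> norm x \<le> M * norm c \<and> norm (D x - c) \<le> norm c / 2"
    using half by blast
  then have "\<exists>g. \<forall>c\<in>D ` Vs. g c \<in> Vs \<and> norm (g c) \<le> M * norm c \<and> norm (D (g c) - c) \<le> norm c / 2"
    by (rule bchoice)
  then obtain g where g: "\<And>c. c \<in> D ` Vs \<Longrightarrow> g c \<in> Vs \<and> norm (g c) \<le> M * norm c \<and> norm (D (g c) - c) \<le> norm c / 2"
    by blast
  have subB: "subspace (D ` Vs)" by (rule subspace_lin_on_image[OF sub lin])
  define r where "r k = ((\<lambda>c. c - D (g c)) ^^ k) b" for k
  have r_Suc: "r (Suc k) = r k - D (g (r k))" for k unfolding r_def by simp
  have rB: "r k \<in> D ` Vs" for k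
  proof (induction k)
    case (Suc k)
    have "D (g (r k)) \<in> D ` Vs" using g[OF Suc] by blast
    then show ?case unfolding r_Suc by (rule subspace_diff[OF subB Suc])
  qed (simp add: r_def bB)
  have r_norm: "norm (r k) \<le> norm b * (1/2)^k" for k
  proof (induction k)
    case (Suc k)
    have "norm (r (Suc k)) \<le> norm (r k) / 2"
      using g[OF rB[of k]] unfolding r_Suc by (simp add: norm_minus_commute)
    then show ?case using Suc by simp
  qed (simp add: r_def)
  define a where "a i = g (r i)" for i
  have aV: "a i \<in> Vs" for i using g[OF rB] unfolding a_def by blast
  have a_norm: "norm (a i) \<le> M * norm b * (1/2)^i" for i
    using g[OF rB[of i]] mult_left_mono[OF r_norm M, of i] unfolding a_def
    by (simp add: mult.assoc del: power_one_over)
  note sum_a = summable_geometric_bound[OF a_norm]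
  define S where "S n = (\<Sum>i<n. a i)" for n
  have SV: "S n \<in> Vs" for n unfolding S_def using aV by (intro subspace_sum[OF sub]) auto
  have DS: "D (S n) = b - r n" for n
  proof (induction n)
    case (Suc n)
    have "D (S (Suc n)) = D (S n) + D (a n)" unfolding S_def using lin_on_add[OF lin SV aV] S_def by simp
    then show ?case using Suc r_Suc by (simp add: a_def)
  qed (simp add: S_def r_def lin_on_zero[OF sub lin])
  have S_lim: "S \<longlonglongrightarrow> suminf a" unfolding S_def by (rule summable_LIMSEQ[OF sum_a(1)])
  have "r \<longlonglongrightarrow> 0"
  proof (rule Lim_null_comparison)
    show "\<forall>\<^sub>F k in sequentially. norm (r k) \<le> norm b * (1/2)^k" using r_norm by simp
    show "(\<lambda>k. norm b * (1/2::real)^k) \<longlonglongrightarrow> 0" by (intro tendsto_mult_right_zero LIMSEQ_power_zero) simp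
  qed
  then have "(\<lambda>n. D (S n)) \<longlonglongrightarrow> b - 0" unfolding DS by (intro tendsto_diff tendsto_const)
  then have "suminf a \<in> Vs" "D (suminf a) = b" using closed_graph_limit[OF clG SV S_lim] by simp_all
  then show ?thesis using sum_a(2) by (auto simp: mult.assoc)
qed

lemma closed_range_poincare:
  fixes Vs :: "'a::{real_inner,complete_space} set" and D :: "'a \<Rightarrow> 'a"
  assumes sub: "subspace Vs" and lin: "lin_on Vs D" and clB: "closed (D ` Vs)"
    and clG: "closed ((\<lambda>x. (x, D x)) ` Vs)"
  obtains c where "c \<ge> 0" "poincare_constant Vs D c"
proof -
  obtain M where M: "M \<ge> 0"
    "\<And>b. b \<in> D ` Vs \<Longrightarrow> \<exists>x\<in>Vs. norm x \<le> M * norm b \<and> norm (D x - b) \<le> norm b / 2"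
    using closed_range_half_lift[OF sub lin clB] by blast
  have "\<exists>z\<in>Vs. D z = 0 \<and> norm (y - z) \<le> 2 * M * norm (D y)" if y: "y \<in> Vs" for y
  proof -
    obtain x where x: "x \<in> Vs" "D x = D y" "norm x \<le> 2 * M * norm (D y)"
      using closed_range_exact_lift[OF sub lin clG M] y by blast
    then have "y - x \<in> Vs" "D (y - x) = 0" using sub y subspace_diff lin_on_diff[OF sub lin y] by auto
    then show ?thesis using x by (intro bexI[of _ "y - x"]) auto
  qed
  then show ?thesis using that[of "2 * M"] M(1) unfolding poincare_constant_def by auto
qed

lemma poincare_constant_mono:
  "poincare_constant Vs D c \<Longrightarrow> c \<le> c' \<Longrightarrow> poincare_constant Vs D c'"
  unfolding poincare_constant_def by (meson mult_right_mono norm_ge_zero order_trans)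

lemma poincare_constant_lift:
  assumes sub: "subspace Vs" and lin: "lin_on Vs D" and c: "poincare_constant Vs D c"
    and b: "b \<in> D ` Vs"
  shows "\<exists>x\<in>Vs. D x = b \<and> norm x \<le> c * norm b"
proof -
  obtain y where y: "y \<in> Vs" "b = D y" using b by blast
  then obtain z where z: "z \<in> Vs" "D z = 0" "norm (y - z) \<le> c * norm (D y)"
    using c unfolding poincare_constant_def by blast
  then have "y - z \<in> Vs" "D (y - z) = b" using sub y lin_on_diff[OF sub lin y(1) z(1)] subspace_diff by auto
  then show ?thesis using z y by (intro bexI[of _ "y - z"]) auto
qed

lemma closed_image_if_coercive:
  fixes B :: "'v::{real_inner,complete_space} set" and g :: "'v \<Rightarrow> 'w::real_inner"
  assumes cl: "closed B" and sub: "subspace B" and lin: "lin_on B g" and cont: "continuous_on B g"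
    and coercive: "\<And>x. x \<in> B \<Longrightarrow> norm x \<le> K * norm (g x)"
  shows "closed (g ` B)"
  unfolding closed_sequential_limits
proof (intro allI impI, elim conjE)
  fix y :: "nat \<Rightarrow> 'w" and l assume yB: "\<forall>n. y n \<in> g ` B" and yl: "y \<longlonglongrightarrow> l"
  have "\<forall>n. \<exists>x. x \<in> B \<and> y n = g x" using yB by blast
  then obtain b where b: "\<And>n. b n \<in> B" "\<And>n. y n = g (b n)" by metis
  have "Cauchy b"
  proof (rule CauchyI)
    fix e :: real assume e: "e > 0"
    define K' where "K' = \<bar>K\<bar> + 1"
    have K': "K' > 0" unfolding K'_def by simp
    obtain M where M: "\<And>m n. m \<ge> M \<Longrightarrow> n \<ge> M \<Longrightarrow> norm (y m - y n) < e / K'"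
      using CauchyD[OF LIMSEQ_imp_Cauchy[OF yl], of "e / K'"] e K' by auto
    have "norm (b m - b n) < e" if "m \<ge> M" "n \<ge> M" for m n
    proof -
      have "b m - b n \<in> B" using b(1) sub subspace_diff by blast
      then have "norm (b m - b n) \<le> K * norm (y m - y n)"
        using coercive lin_on_diff[OF sub lin b(1) b(1)] b(2) by metis
      also have "\<dots> \<le> K' * norm (y m - y n)" unfolding K'_def by (intro mult_right_mono) auto
      also have "\<dots> < e" using M[OF that] K' by (simp add: field_simps)
      finally show ?thesis .
    qed
    then show "\<exists>M. \<forall>m\<ge>M. \<forall>n\<ge>M. norm (b m - b n) < e" by blast
  qed
  then obtain x where bx: "b \<longlonglongrightarrow> x" using convergent_eq_Cauchy by blast
  have xB: "x \<in> B" using closed_sequentially[OF cl] b(1) bx by blast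
  have "(\<lambda>n. g (b n)) \<longlonglongrightarrow> g x"
    using cont xB b(1) bx unfolding continuous_on_sequentially comp_def by blast
  moreover have "y = (\<lambda>n. g (b n))" using b(2) by (intro ext) simp
  ultimately have "l = g x" using yl LIMSEQ_unique by metis
  then show "l \<in> g ` B" using xB by blast
qed

text \<open>Degrees k - 1, k, k + 1 of a discrete complex with the morphism i into W; G is a common
  constant for the bound of i, its inverse bound on cycles and the discrete Poincare inequality.\<close>
locale hilbert_triple =
  fixes V0 V1 V2 :: "'v::{real_inner,complete_space} set"
    and d0 d1 :: "'v \<Rightarrow> 'v"
    and i0 i1 i2 :: "'v \<Rightarrow> 'w::{real_inner,complete_space}"
    and G :: real
  assumes subspace_V0: "subspace V0" and subspace_V1: "subspace V1" and subspace_V2: "subspace V2"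
    and d0_mem: "\<And>x. x \<in> V0 \<Longrightarrow> d0 x \<in> V1" and d1_mem: "\<And>x. x \<in> V1 \<Longrightarrow> d1 x \<in> V2"
    and d1_d0: "\<And>x. x \<in> V0 \<Longrightarrow> d1 (d0 x) = 0"
    and lin_d0: "lin_on V0 d0" and lin_d1: "lin_on V1 d1"
    and lin_i0: "lin_on V0 i0" and lin_i1: "lin_on V1 i1" and lin_i2: "lin_on V2 i2"
    and closed_range_d0: "closed (d0 ` V0)"
    and G_ge_1: "1 \<le> G"
    and norm_i0_le: "\<And>x. x \<in> V0 \<Longrightarrow> norm (i0 x) \<le> G * norm x"
    and norm_i1_le: "\<And>x. x \<in> V1 \<Longrightarrow> norm (i1 x) \<le> G * norm x"
    and cycle_norm_le0: "\<And>x. x \<in> V0 \<Longrightarrow> d0 x = 0 \<Longrightarrow> norm x \<le> G * norm (i0 x)"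
    and cycle_norm_le1: "\<And>x. x \<in> V1 \<Longrightarrow> d1 x = 0 \<Longrightarrow> norm x \<le> G * norm (i1 x)"
    and boundary_norm_le2: "\<And>x. x \<in> V1 \<Longrightarrow> norm (d1 x) \<le> G * norm (i2 (d1 x))"
    and poincare0: "poincare_constant V0 d0 G" and poincare1: "poincare_constant V1 d1 G"
begin

definition harmonic :: "'v set"
  where "harmonic = {z\<in>V1. d1 z = 0 \<and> (\<forall>b\<in>d0 ` V0. inner z b = 0)}"

definition harmonic' :: "'v set"
  where "harmonic' = {z\<in>V1. d1 z = 0 \<and> (\<forall>b\<in>d0 ` V0. inner (i1 z) (i1 b) = 0)}"

lemma G_nonneg: "0 \<le> G"
  using G_ge_1 by simp

lemma power_G_mono: "a \<le> b \<Longrightarrow> 0 \<le> X \<Longrightarrow> G^a * X \<le> G^b * X"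
  by (rule power_mono_factor[OF G_ge_1])

lemma cycle_norm_bound1:
  assumes "x \<in> V1" "d1 x = 0" "norm (i1 x) \<le> X" shows "norm x \<le> G * X"
  using cycle_norm_le1[OF assms(1,2)] mult_left_mono[OF assms(3) G_nonneg] by linarith

lemma i1_diff: "x \<in> V1 \<Longrightarrow> y \<in> V1 \<Longrightarrow> i1 (x - y) = i1 x - i1 y"
  and i0_diff: "x \<in> V0 \<Longrightarrow> y \<in> V0 \<Longrightarrow> i0 (x - y) = i0 x - i0 y"
  and d1_diff: "x \<in> V1 \<Longrightarrow> y \<in> V1 \<Longrightarrow> d1 (x - y) = d1 x - d1 y"
  and d0_diff: "x \<in> V0 \<Longrightarrow> y \<in> V0 \<Longrightarrow> d0 (x - y) = d0 x - d0 y"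
  using lin_on_diff subspace_V0 subspace_V1 lin_i0 lin_i1 lin_d0 lin_d1 by blast+

lemma V0_diff: "x \<in> V0 \<Longrightarrow> y \<in> V0 \<Longrightarrow> x - y \<in> V0"
  and V1_diff: "x \<in> V1 \<Longrightarrow> y \<in> V1 \<Longrightarrow> x - y \<in> V1"
  using subspace_diff subspace_V0 subspace_V1 by blast+

lemma i1_zero [simp]: "i1 0 = 0" and i2_zero [simp]: "i2 0 = 0" and d0_zero [simp]: "d0 0 = 0"
  using lin_on_zero subspace_V0 subspace_V1 subspace_V2 lin_i1 lin_i2 lin_d0 by blast+

lemma boundary_mem:
  assumes "b \<in> d0 ` V0" shows "b \<in> V1" "d1 b = 0"
  using assms d0_mem d1_d0 by auto

lemma boundary_lift:
  assumes "b \<in> d0 ` V0" shows "\<exists>t\<in>V0. d0 t = b \<and> norm t \<le> G * norm b"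
  by (rule poincare_constant_lift[OF subspace_V0 lin_d0 poincare0 assms])

lemma poincare_split0:
  assumes x: "x \<in> V0"
  obtains y where "y \<in> V0" "d0 y = d0 x" "x - y \<in> V0" "d0 (x - y) = 0" "norm y \<le> G * norm (d0 x)"
proof -
  obtain z where z: "z \<in> V0" "d0 z = 0" "norm (x - z) \<le> G * norm (d0 x)"
    using poincare0 x unfolding poincare_constant_def by blast
  show ?thesis
    by (rule that[of "x - z"]) (use x z V0_diff d0_diff in auto)
qed

lemma poincare_split1:
  assumes x: "x \<in> V1"
  obtains y where "y \<in> V1" "d1 y = d1 x" "x - y \<in> V1" "d1 (x - y) = 0" "norm y \<le> G * norm (d1 x)"
proof -
  obtain z where z: "z \<in> V1" "d1 z = 0" "norm (x - z) \<le> G * norm (d1 x)"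
    using poincare1 x unfolding poincare_constant_def by blast
  show ?thesis
    by (rule that[of "x - z"]) (use x z V1_diff d1_diff in auto)
qed

lemma hodge_decomposition:
  assumes z: "z \<in> V1" "d1 z = 0"
  obtains b where "b \<in> d0 ` V0" "z - b \<in> harmonic" "inner (z - b) b = 0"
proof -
  have "subspace (d0 ` V0)" by (rule subspace_lin_on_image[OF subspace_V0 lin_d0])
  then obtain b where b: "b \<in> d0 ` V0" "\<forall>c\<in>d0 ` V0. inner (z - b) c = 0"
    using orthogonal_projection_exists[OF _ closed_range_d0] by blast
  then have "z - b \<in> harmonic"
    using z boundary_mem V1_diff d1_diff unfolding harmonic_def by auto
  then show ?thesis using that b by blast
qed

text \<open>The image of the boundaries under i1 is closed because i1 is bounded below on cycles.\<close>
lemma modified_hodge_decomposition: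
  assumes z: "z \<in> V1" "d1 z = 0"
  obtains b where "b \<in> d0 ` V0" "z - b \<in> harmonic'" "inner (i1 (z - b)) (i1 b) = 0"
proof -
  let ?B = "d0 ` V0"
  have subB: "subspace ?B" by (rule subspace_lin_on_image[OF subspace_V0 lin_d0])
  have BV: "?B \<subseteq> V1" using boundary_mem by blast
  have "continuous_on ?B i1"
    using lin_on_continuous_on[OF subspace_V1 lin_i1 norm_i1_le] continuous_on_subset BV by blast
  then have "closed (i1 ` ?B)"
    using closed_image_if_coercive[OF closed_range_d0 subB lin_on_subset[OF lin_i1 BV]]
      cycle_norm_le1 boundary_mem by blast
  then obtain y where y: "y \<in> i1 ` ?B" "\<forall>c\<in>i1 ` ?B. inner (i1 z - y) c = 0"
    using orthogonal_projection_exists[OF subspace_lin_on_image[OF subB lin_on_subset[OF lin_i1 BV]]]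
    by blast
  then obtain b where b: "b \<in> ?B" "y = i1 b" by blast
  then have "\<forall>c\<in>?B. inner (i1 (z - b)) (i1 c) = 0" using y i1_diff z BV by auto
  then have "z - b \<in> harmonic'"
    using z b boundary_mem V1_diff d1_diff unfolding harmonic'_def by auto
  then show ?thesis using that b \<open>\<forall>c\<in>?B. _\<close> by blast
qed

lemma harmonic_boundary_part:
  assumes h: "h \<in> harmonic" and b: "b \<in> d0 ` V0" "inner (i1 (h - b)) (i1 b) = 0"
  shows "norm (i1 b) * norm (i1 b) = inner (i1 h) (i1 b) - inner h b"
    and "norm b \<le> G^2 * norm h"
proof -
  have hV: "h \<in> V1" "inner h b = 0" using h b(1) unfolding harmonic_def by auto
  note bV = boundary_mem[OF b(1)]
  have ib: "norm (i1 b) * norm (i1 b) = inner (i1 h) (i1 b)"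
    using b(2) i1_diff[OF hV(1) bV(1)] by (simp add: norm_mult_norm_eq_inner inner_diff_left)
  then show "norm (i1 b) * norm (i1 b) = inner (i1 h) (i1 b) - inner h b" using hV(2) by simp
  have "norm (i1 b) * norm (i1 b) \<le> (G * norm h) * norm (i1 b)"
    using ib inner_le_bound(1)[OF norm_i1_le[OF hV(1)]] by simp
  then have "norm (i1 b) \<le> G * norm h" by (rule le_of_square_le) (use G_nonneg in simp_all)
  then show "norm b \<le> G^2 * norm h"
    using cycle_norm_bound1[OF bV] by (simp add: power2_eq_square mult.assoc)
qed

end

section \<open>Stability of the modified problem\<close>

context hilbert_triple
begin

definition modified_solution :: "'w \<Rightarrow> 'v \<Rightarrow> 'v \<Rightarrow> 'v \<Rightarrow> bool" where
  "modified_solution f s u p \<longleftrightarrow> s \<in> V0 \<and> u \<in> V1 \<and> p \<in> harmonic' \<and>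
     (\<forall>t\<in>V0. inner (i0 s) (i0 t) = inner (i1 u) (i1 (d0 t))) \<and>
     (\<forall>v\<in>V1. inner (i1 (d0 s)) (i1 v) + inner (i2 (d1 u)) (i2 (d1 v)) + inner (i1 p) (i1 v)
        = inner f (i1 v)) \<and>
     (\<forall>q\<in>harmonic'. inner (i1 u) (i1 q) = 0)"

context
  fixes f :: 'w and s u p :: 'v
  assumes modified: "modified_solution f s u p"
begin

lemma modified_mem: "s \<in> V0" "u \<in> V1" "p \<in> V1" "d1 p = 0"
  and modified_harmonic: "b \<in> d0 ` V0 \<Longrightarrow> inner (i1 p) (i1 b) = 0"
  and modified_eq1: "t \<in> V0 \<Longrightarrow> inner (i0 s) (i0 t) = inner (i1 u) (i1 (d0 t))"
  and modified_eq2: "v \<in> V1 \<Longrightarrow>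
     inner (i1 (d0 s)) (i1 v) + inner (i2 (d1 u)) (i2 (d1 v)) + inner (i1 p) (i1 v) = inner f (i1 v)"
  and modified_eq3: "q \<in> harmonic' \<Longrightarrow> inner (i1 u) (i1 q) = 0"
  using modified unfolding modified_solution_def harmonic'_def by auto

lemma norm_i1_d0_modified: "norm (i1 (d0 s)) \<le> norm f"
proof (rule norm_le_if_inner_self_eq)
  show "inner (i1 (d0 s)) (i1 (d0 s)) = inner f (i1 (d0 s))"
    using modified_eq2[OF d0_mem] modified_harmonic d1_d0 modified_mem(1) by simp
qed

lemma norm_d0_modified: "norm (d0 s) \<le> G * norm f"
  by (rule cycle_norm_bound1[OF d0_mem d1_d0 norm_i1_d0_modified]) (rule modified_mem(1))+

lemma norm_i1_p_modified: "norm (i1 p) \<le> norm f"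
proof (rule norm_le_if_inner_self_eq)
  show "inner (i1 p) (i1 p) = inner f (i1 p)"
    using modified_eq2[OF modified_mem(3)] modified_harmonic[of "d0 s"] modified_mem
    by (simp add: inner_commute)
qed

lemma norm_p_modified: "norm p \<le> G * norm f"
  by (rule cycle_norm_bound1[OF modified_mem(3,4) norm_i1_p_modified])

text \<open>Test the second equation with the part of u that Poincare's inequality controls by d1 u.\<close>
lemma norm_d1_modified: "norm (d1 u) \<le> 3 * G^4 * norm f"
proof -
  obtain y where y: "y \<in> V1" "d1 y = d1 u" "norm y \<le> G * norm (d1 u)"
    using poincare_split1[OF modified_mem(2)] by metis
  have iy: "norm (i1 y) \<le> G^2 * norm (d1 u)"
    using norm_i1_le[OF y(1)] mult_left_mono[OF y(3) G_nonneg] by (simp add: power2_eq_square)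
  have "norm (i2 (d1 u)) * norm (i2 (d1 u))
      = inner f (i1 y) - inner (i1 (d0 s)) (i1 y) - inner (i1 p) (i1 y)"
    using modified_eq2[OF y(1)] y(2) by (simp add: norm_mult_norm_eq_inner algebra_simps)
  also have "\<dots> \<le> 3 * norm f * norm (i1 y)"
    using norm_cauchy_schwarz[of f "i1 y"] inner_le_bound(2)[OF norm_i1_d0_modified, of "i1 y"]
      inner_le_bound(2)[OF norm_i1_p_modified, of "i1 y"] by linarith
  also have "\<dots> \<le> 3 * norm f * (G^2 * norm (d1 u))" using iy by (intro mult_left_mono) auto
  finally have i2: "norm (i2 (d1 u)) * norm (i2 (d1 u)) \<le> 3 * norm f * G^2 * norm (d1 u)"
    by (simp add: mult.assoc)
  have "norm (d1 u) * norm (d1 u) \<le> (G * norm (i2 (d1 u))) * (G * norm (i2 (d1 u)))"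
    using boundary_norm_le2[OF modified_mem(2)] G_nonneg by (intro mult_mono) auto
  also have "\<dots> = G^2 * (norm (i2 (d1 u)) * norm (i2 (d1 u)))" by (simp add: power2_eq_square)
  also have "\<dots> \<le> G^2 * (3 * norm f * G^2 * norm (d1 u))" using i2 by (intro mult_left_mono) auto
  also have "\<dots> = (3 * G^4 * norm f) * norm (d1 u)" by (simp add: eval_nat_numeral algebra_simps)
  finally show ?thesis by (rule le_of_square_le) (use G_nonneg in simp_all)
qed

lemma norm_s_modified: "norm s \<le> 2 * G^4 * norm f"
proof -
  obtain y where y: "y \<in> V0" "s - y \<in> V0" "d0 (s - y) = 0" "norm y \<le> G * norm (d0 s)"
    using poincare_split0[OF modified_mem(1)] by metis
  define z where "z = s - y"
  have ny: "norm y \<le> G^2 * norm f"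
    using y(4) mult_left_mono[OF norm_d0_modified G_nonneg] by (simp add: power2_eq_square)
  have "norm (i0 z) * norm (i0 z) = inner (i0 s) (i0 z) - inner (i0 y) (i0 z)"
    unfolding z_def using i0_diff[OF modified_mem(1) y(1)] by (simp add: norm_mult_norm_eq_inner inner_diff_left)
  also have "inner (i0 s) (i0 z) = 0" using modified_eq1[of z] y(2,3) unfolding z_def by simp
  also have "norm (i0 y) \<le> G^3 * norm f"
    using norm_i0_le[OF y(1)] mult_left_mono[OF ny G_nonneg] by (simp add: power_numeral_reduce)
  then have "0 - inner (i0 y) (i0 z) \<le> (G^3 * norm f) * norm (i0 z)" using inner_le_bound(2) by simp
  finally have "norm (i0 z) \<le> G^3 * norm f"
    by (rule le_of_square_le) (use G_nonneg in simp_all)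
  then have "norm z \<le> G * (G^3 * norm f)"
    using cycle_norm_le0[of z] y(2,3) mult_left_mono[OF _ G_nonneg] order_trans unfolding z_def by blast
  then have "norm z \<le> G^4 * norm f" by (simp add: eval_nat_numeral algebra_simps)
  moreover have "norm s \<le> norm y + norm z" using norm_triangle_ineq[of y z] by (simp add: z_def)
  moreover have "G^2 * norm f \<le> G^4 * norm f" by (rule power_G_mono) auto
  ultimately show ?thesis using ny by linarith
qed

lemma pullback_split_modified:
  assumes y: "y \<in> V1" and b: "b \<in> d0 ` V0"
  shows "i1 u = i1 y + i1 b + i1 (u - y - b)"
proof -
  have "i1 (u - y - b) = i1 u - i1 y - i1 b"
    using i1_diff[OF V1_diff[OF modified_mem(2) y] boundary_mem(1)[OF b]] i1_diff[OF modified_mem(2) y]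
    by simp
  then show ?thesis by (simp add: algebra_simps)
qed

text \<open>The modified harmonic part is i1-orthogonal to u by the third equation.\<close>
lemma norm_harmonic'_part_modified:
  assumes y: "y \<in> V1" and b: "b \<in> d0 ` V0" "u - y - b \<in> harmonic'" "inner (i1 (u - y - b)) (i1 b) = 0"
  shows "norm (u - y - b) \<le> G * norm (i1 y)"
proof -
  define q where "q = u - y - b"
  have "norm (i1 q) * norm (i1 q) = - inner (i1 y) (i1 q)"
    using modified_eq3[OF b(2)] b(3) pullback_split_modified[OF y b(1)] unfolding q_def[symmetric]
    by (simp add: norm_mult_norm_eq_inner inner_add_left inner_add_right inner_commute)
  also have "\<dots> \<le> norm (i1 y) * norm (i1 q)" by (rule inner_le_bound(2)) simp
  finally have "norm (i1 q) \<le> norm (i1 y)" by (rule le_of_square_le) simp_all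
  then show ?thesis using cycle_norm_bound1[of q] b(2) unfolding q_def harmonic'_def by blast
qed

text \<open>The boundary part is controlled by testing the first equation with a lift of it.\<close>
lemma norm_boundary_part_modified:
  assumes y: "y \<in> V1" and b: "b \<in> d0 ` V0" "inner (i1 (u - y - b)) (i1 b) = 0"
  shows "norm b \<le> G * (2 * G^8 * norm f + norm (i1 y))"
proof -
  note bV = boundary_mem[OF b(1)]
  obtain t where t: "t \<in> V0" "d0 t = b" "norm t \<le> G * norm b" using boundary_lift[OF b(1)] by blast
  have it: "norm (i0 t) \<le> G^3 * norm (i1 b)"
  proof -
    have "norm (i0 t) \<le> G * (G * (G * norm (i1 b)))"
      using norm_i0_le[OF t(1)] t(3) cycle_norm_le1[OF bV] G_nonneg
      by (meson mult_left_mono order_trans)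
    then show ?thesis by (simp add: power3_eq_cube mult.assoc)
  qed
  have is': "norm (i0 s) \<le> 2 * G^5 * norm f"
    using norm_i0_le[OF modified_mem(1)] mult_left_mono[OF norm_s_modified G_nonneg]
    by (simp add: eval_nat_numeral algebra_simps)
  have "norm (i1 b) * norm (i1 b) = inner (i0 s) (i0 t) - inner (i1 y) (i1 b)"
    using modified_eq1[OF t(1)] t(2) b(2) pullback_split_modified[OF y b(1)]
    by (simp add: norm_mult_norm_eq_inner inner_add_left inner_add_right inner_commute)
  also have "\<dots> \<le> (2 * G^5 * norm f) * (G^3 * norm (i1 b)) + norm (i1 y) * norm (i1 b)"
    using norm_cauchy_schwarz[of "i0 s" "i0 t"] mult_mono[OF is' it] Cauchy_Schwarz_ineq2[of "i1 y" "i1 b"]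
      G_nonneg by simp
  also have "\<dots> = (2 * G^8 * norm f + norm (i1 y)) * norm (i1 b)"
    by (simp add: eval_nat_numeral algebra_simps)
  finally have "norm (i1 b) \<le> 2 * G^8 * norm f + norm (i1 y)"
    by (rule le_of_square_le) (use G_nonneg in simp_all)
  then show ?thesis by (rule cycle_norm_bound1[OF bV])
qed

lemma norm_u_modified: "norm u \<le> 11 * G^9 * norm f"
proof -
  obtain y where y: "y \<in> V1" "u - y \<in> V1" "d1 (u - y) = 0" "norm y \<le> G * norm (d1 u)"
    using poincare_split1[OF modified_mem(2)] by metis
  obtain b where b: "b \<in> d0 ` V0" "u - y - b \<in> harmonic'" "inner (i1 (u - y - b)) (i1 b) = 0"
    using modified_hodge_decomposition[OF y(2,3)] by blast
  have ny: "norm y \<le> 3 * G^5 * norm f"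
    using y(4) mult_left_mono[OF norm_d1_modified G_nonneg] by (simp add: eval_nat_numeral algebra_simps)
  have iy: "G * norm (i1 y) \<le> 3 * G^7 * norm f"
    using mult_left_mono[OF norm_i1_le[OF y(1)] G_nonneg] mult_left_mono[OF ny, of "G * G"] G_nonneg
    by (simp add: eval_nat_numeral algebra_simps)
  have "norm u \<le> norm y + norm b + norm (u - y - b)"
    using norm_triangle_ineq[of "y + b" "u - y - b"] norm_triangle_ineq[of y b] by simp
  also have "\<dots> \<le> 3 * G^5 * norm f + (2 * G^9 * norm f + G * norm (i1 y)) + G * norm (i1 y)"
    using ny norm_boundary_part_modified[OF y(1) b(1,3)] norm_harmonic'_part_modified[OF y(1) b]
    by (simp add: algebra_simps eval_nat_numeral)
  also have "\<dots> \<le> 11 * G^9 * norm f"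
  proof -
    have "G^5 * norm f \<le> G^9 * norm f" "G^7 * norm f \<le> G^9 * norm f"
      by (rule power_G_mono; simp)+
    then show ?thesis using iy by linarith
  qed
  finally show ?thesis .
qed

end

end

section \<open>The difference of the two discrete solutions\<close>

context hilbert_triple
begin

definition galerkin_solution :: "'v \<Rightarrow> 'v \<Rightarrow> 'v \<Rightarrow> 'v \<Rightarrow> bool" where
  "galerkin_solution fh s u p \<longleftrightarrow> s \<in> V0 \<and> u \<in> V1 \<and> p \<in> harmonic \<and>
     (\<forall>t\<in>V0. inner s t = inner u (d0 t)) \<and>
     (\<forall>v\<in>V1. inner (d0 s) v + inner (d1 u) (d1 v) + inner p v = inner fh v) \<and>
     (\<forall>q\<in>harmonic. inner u q = 0)"

text \<open>g plays the role of i_h^* f and \<eta> that of the operator norm of I - J_h.\<close>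
context
  fixes f :: 'w and fh g s u p s' u' p' :: 'v and \<eta> :: real
  assumes galerkin: "galerkin_solution fh s u p"
    and modified': "modified_solution f s' u' p'"
    and adjoint: "\<And>v. v \<in> V1 \<Longrightarrow> inner g v = inner f (i1 v)"
    and defect0: "\<And>x y. x \<in> V0 \<Longrightarrow> y \<in> V0 \<Longrightarrow> \<bar>inner x y - inner (i0 x) (i0 y)\<bar> \<le> \<eta> * norm x * norm y"
    and defect1: "\<And>x y. x \<in> V1 \<Longrightarrow> y \<in> V1 \<Longrightarrow> \<bar>inner x y - inner (i1 x) (i1 y)\<bar> \<le> \<eta> * norm x * norm y"
    and defect2: "\<And>x y. x \<in> V2 \<Longrightarrow> y \<in> V2 \<Longrightarrow> \<bar>inner x y - inner (i2 x) (i2 y)\<bar> \<le> \<eta> * norm x * norm y"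
    and \<eta>_nonneg: "0 \<le> \<eta>"
begin

lemma galerkin_mem: "s \<in> V0" "u \<in> V1" "p \<in> V1" "d1 p = 0"
  and galerkin_harmonic: "b \<in> d0 ` V0 \<Longrightarrow> inner p b = 0"
  and galerkin_eq1: "t \<in> V0 \<Longrightarrow> inner s t = inner u (d0 t)"
  and galerkin_eq2: "v \<in> V1 \<Longrightarrow> inner (d0 s) v + inner (d1 u) (d1 v) + inner p v = inner fh v"
  and galerkin_eq3: "q \<in> harmonic \<Longrightarrow> inner u q = 0"
  using galerkin unfolding galerkin_solution_def harmonic_def by auto

lemma error_eq1:
  assumes "t \<in> V0"
  shows "inner (s - s') t - inner (u - u') (d0 t)
    = (inner (i0 s') (i0 t) - inner s' t) - (inner (i1 u') (i1 (d0 t)) - inner u' (d0 t))"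
  using galerkin_eq1[OF assms] modified_eq1[OF modified' assms] by (simp add: inner_diff_left)

lemma error_eq2:
  assumes v: "v \<in> V1"
  shows "inner (d0 (s - s')) v + inner (d1 (u - u')) (d1 v) + inner (p - p') v
    = inner (fh - g) v + (inner (i1 (d0 s')) (i1 v) - inner (d0 s') v)
      + (inner (i2 (d1 u')) (i2 (d1 v)) - inner (d1 u') (d1 v)) + (inner (i1 p') (i1 v) - inner p' v)"
  unfolding d0_diff[OF galerkin_mem(1) modified_mem(1)[OF modified']]
    d1_diff[OF galerkin_mem(2) modified_mem(2)[OF modified']]
  using galerkin_eq2[OF v] modified_eq2[OF modified' v] adjoint[OF v]
  by (simp add: inner_diff_left algebra_simps)

lemma defect_le:
  "x \<in> V0 \<Longrightarrow> y \<in> V0 \<Longrightarrow> inner (i0 x) (i0 y) - inner x y \<le> \<eta> * norm x * norm y"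
  "x \<in> V0 \<Longrightarrow> y \<in> V0 \<Longrightarrow> inner x y - inner (i0 x) (i0 y) \<le> \<eta> * norm x * norm y"
  "x \<in> V1 \<Longrightarrow> y \<in> V1 \<Longrightarrow> inner (i1 x) (i1 y) - inner x y \<le> \<eta> * norm x * norm y"
  "x \<in> V1 \<Longrightarrow> y \<in> V1 \<Longrightarrow> inner x y - inner (i1 x) (i1 y) \<le> \<eta> * norm x * norm y"
  "x \<in> V2 \<Longrightarrow> y \<in> V2 \<Longrightarrow> inner (i2 x) (i2 y) - inner x y \<le> \<eta> * norm x * norm y"
  using defect0[of x y] defect1[of x y] defect2[of x y] by linarith+

abbreviation data_error :: real where "data_error \<equiv> norm (fh - g) + \<eta> * norm f"

lemma data_error_nonneg: "0 \<le> data_error"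
  using \<eta>_nonneg by simp

lemma data_error_le: "norm (fh - g) \<le> data_error" "data_error \<le> G * data_error"
  using \<eta>_nonneg data_error_nonneg mult_right_mono[OF G_ge_1 data_error_nonneg] by auto

lemma inner_data_le: "inner (fh - g) v \<le> data_error * norm v"
  using inner_le_bound(1)[OF data_error_le(1)] .

lemma eta_norm_le_data:
  assumes "norm x \<le> c * norm f" "0 \<le> c"
  shows "\<eta> * norm x \<le> c * data_error"
  using mult_left_mono[OF assms(1) \<eta>_nonneg] mult_nonneg_nonneg[OF assms(2) norm_ge_zero[of "fh - g"]]
  by (simp add: algebra_simps)

lemma defect_le_data:
  assumes "norm x \<le> c * norm f" "0 \<le> c"
  shows "\<eta> * norm x * norm y \<le> c * data_error * norm y"
  using eta_norm_le_data[OF assms] by (rule mult_right_mono) simp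

lemma error_mem: "s - s' \<in> V0" "u - u' \<in> V1" "p - p' \<in> V1"
  using V0_diff V1_diff galerkin_mem modified_mem[OF modified'] by auto

lemma norm_d0_error: "norm (d0 (s - s')) \<le> 2 * G * data_error"
proof -
  define b where "b = d0 (s - s')"
  have bB: "b \<in> d0 ` V0" unfolding b_def using error_mem by blast
  note bV = boundary_mem[OF bB]
  have "norm b * norm b = inner (fh - g) b + (inner (i1 (d0 s')) (i1 b) - inner (d0 s') b)"
    using error_eq2[OF bV(1)] galerkin_harmonic[OF bB] modified_harmonic[OF modified' bB] bV(2)
    by (simp add: b_def norm_mult_norm_eq_inner inner_diff_left inner_commute)
  also have "\<dots> \<le> data_error * norm b + G * data_error * norm b"
    using inner_data_le[of b] defect_le(3)[OF d0_mem[OF modified_mem(1)[OF modified']] bV(1)]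
      defect_le_data[OF norm_d0_modified[OF modified'] G_nonneg, of b] by linarith
  also have "\<dots> \<le> (2 * G * data_error) * norm b"
    using mult_right_mono[OF data_error_le(2) norm_ge_zero[of b]] by (simp add: algebra_simps)
  finally show ?thesis unfolding b_def
    by (rule le_of_square_le) (use G_nonneg data_error_nonneg in simp_all)
qed

lemma norm_p_error: "norm (p - p') \<le> 5 * G * data_error"
proof -
  define r where "r = p - p'"
  have rV: "r \<in> V1" "d1 r = 0"
    using error_mem d1_diff galerkin_mem modified_mem[OF modified'] by (auto simp: r_def)
  have "norm r * norm r = inner (fh - g) r - inner (d0 (s - s')) r
      + (inner (i1 (d0 s')) (i1 r) - inner (d0 s') r) + (inner (i1 p') (i1 r) - inner p' r)"
    using error_eq2[OF rV(1)] rV(2) by (simp add: r_def norm_mult_norm_eq_inner algebra_simps)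
  also have "\<dots> \<le> data_error * norm r + 2 * G * data_error * norm r
      + G * data_error * norm r + G * data_error * norm r"
    using inner_data_le[of r] inner_le_bound(2)[OF norm_d0_error, of r]
      defect_le(3)[OF d0_mem[OF modified_mem(1)[OF modified']] rV(1)]
      defect_le_data[OF norm_d0_modified[OF modified'] G_nonneg, of r]
      defect_le(3)[OF modified_mem(3)[OF modified'] rV(1)]
      defect_le_data[OF norm_p_modified[OF modified'] G_nonneg, of r] by linarith
  also have "\<dots> \<le> (5 * G * data_error) * norm r"
    using mult_right_mono[OF data_error_le(2) norm_ge_zero[of r]] by (simp add: algebra_simps)
  finally show ?thesis unfolding r_def
    by (rule le_of_square_le) (use G_nonneg data_error_nonneg in simp_all)
qed

lemma norm_d1_error: "norm (d1 (u - u')) \<le> 13 * G^4 * data_error"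
proof -
  define w where "w = u - u'"
  obtain y where y: "y \<in> V1" "d1 y = d1 w" "norm y \<le> G * norm (d1 w)"
    using poincare_split1[of w] error_mem unfolding w_def by metis
  have "norm (d1 w) * norm (d1 w) = inner (fh - g) y - inner (d0 (s - s')) y - inner (p - p') y
      + (inner (i1 (d0 s')) (i1 y) - inner (d0 s') y) + (inner (i1 p') (i1 y) - inner p' y)
      + (inner (i2 (d1 u')) (i2 (d1 w)) - inner (d1 u') (d1 w))"
    using error_eq2[OF y(1)] y(2) by (simp add: w_def norm_mult_norm_eq_inner algebra_simps)
  also have "\<dots> \<le> data_error * norm y + 2 * G * data_error * norm y + 5 * G * data_error * norm y
      + G * data_error * norm y + G * data_error * norm y + 3 * G^4 * data_error * norm (d1 w)"
    using inner_data_le[of y] inner_le_bound(2)[OF norm_d0_error, of y] inner_le_bound(2)[OF norm_p_error, of y]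
      defect_le(3)[OF d0_mem[OF modified_mem(1)[OF modified']] y(1)]
      defect_le_data[OF norm_d0_modified[OF modified'] G_nonneg, of y]
      defect_le(3)[OF modified_mem(3)[OF modified'] y(1)]
      defect_le_data[OF norm_p_modified[OF modified'] G_nonneg, of y]
      defect_le(5)[OF d1_mem[OF modified_mem(2)[OF modified']] d1_mem[OF error_mem(2)]]
      defect_le_data[OF norm_d1_modified[OF modified'], of "d1 w"] G_nonneg
    unfolding w_def by (simp add: algebra_simps)
  also have "\<dots> \<le> 10 * G * data_error * norm y + 3 * G^4 * data_error * norm (d1 w)"
    using mult_right_mono[OF data_error_le(2) norm_ge_zero[of y]] by (simp add: algebra_simps)
  also have "\<dots> \<le> (13 * G^4 * data_error) * norm (d1 w)"
  proof -
    have "10 * G * data_error * norm y \<le> 10 * G * data_error * (G * norm (d1 w))"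
      using y(3) G_nonneg data_error_nonneg by (intro mult_left_mono) auto
    also have "\<dots> = 10 * (G^2 * (data_error * norm (d1 w)))" by (simp add: power2_eq_square)
    also have "\<dots> \<le> 10 * (G^4 * (data_error * norm (d1 w)))"
      using power_G_mono[of 2 4 "data_error * norm (d1 w)"] data_error_nonneg by simp
    finally show ?thesis by (simp add: algebra_simps)
  qed
  finally show ?thesis unfolding w_def
    by (rule le_of_square_le) (use G_nonneg data_error_nonneg in simp_all)
qed

lemma norm_s_error: "norm (s - s') \<le> 6 * G^4 * data_error"
proof -
  obtain y where y: "y \<in> V0" "s - s' - y \<in> V0" "d0 (s - s' - y) = 0" "norm y \<le> G * norm (d0 (s - s'))"
    using poincare_split0[OF error_mem(1)] by metis
  define z where "z = s - s' - y"
  have ny: "norm y \<le> 2 * G^2 * data_error"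
    using y(4) mult_left_mono[OF norm_d0_error G_nonneg] by (simp add: power2_eq_square algebra_simps)
  have "norm z * norm z = (inner (i0 s') (i0 z) - inner s' z) - inner y z"
    using error_eq1[OF y(2)] y(3) by (simp add: z_def norm_mult_norm_eq_inner inner_diff_left)
  also have "\<dots> \<le> 2 * G^4 * data_error * norm z + 2 * G^2 * data_error * norm z"
    using defect_le(1)[OF modified_mem(1)[OF modified'] y(2)]
      defect_le_data[OF norm_s_modified[OF modified'], of z] inner_le_bound(2)[OF ny, of z] G_nonneg
    unfolding z_def by (simp add: algebra_simps)
  also have "\<dots> \<le> (4 * G^4 * data_error) * norm z"
  proof -
    have "G^2 * (data_error * norm z) \<le> G^4 * (data_error * norm z)"
      by (rule power_G_mono) (use data_error_nonneg in auto)
    then show ?thesis by (simp only: mult.assoc)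
  qed
  finally have "norm z \<le> 4 * G^4 * data_error"
    by (rule le_of_square_le) (use G_nonneg data_error_nonneg in simp_all)
  moreover have "norm (s - s') \<le> norm y + norm z" using norm_triangle_ineq[of y z] by (simp add: z_def)
  moreover have "G^2 * data_error \<le> G^4 * data_error" by (rule power_G_mono) (use data_error_nonneg in auto)
  ultimately show ?thesis using ny by linarith
qed

lemma harmonic_boundary_part_small:
  assumes h: "h \<in> harmonic" and b: "b \<in> d0 ` V0" "inner (i1 (h - b)) (i1 b) = 0"
  shows "norm b \<le> G^2 * (\<eta> * norm h)"
proof -
  have hV: "h \<in> V1" using h unfolding harmonic_def by auto
  note bV = boundary_mem[OF b(1)]
  have "norm (i1 b) * norm (i1 b) \<le> \<eta> * norm h * norm b"
    using harmonic_boundary_part(1)[OF h b] defect_le(3)[OF hV bV(1)] by simp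
  also have "\<dots> \<le> (G * (\<eta> * norm h)) * norm (i1 b)"
    using mult_left_mono[OF cycle_norm_le1[OF bV], of "\<eta> * norm h"] \<eta>_nonneg
    by (simp add: algebra_simps)
  finally have "norm (i1 b) \<le> G * (\<eta> * norm h)"
    by (rule le_of_square_le) (use G_nonneg \<eta>_nonneg in simp_all)
  then show ?thesis using cycle_norm_bound1[OF bV] by (simp add: power2_eq_square mult.assoc)
qed

text \<open>u' need not be orthogonal to the harmonic forms, only to the modified harmonic part of h;
  the remaining boundary part of h is of size \<eta> * norm h since h is orthogonal to the boundaries.\<close>
lemma inner_modified_harmonic_le:
  assumes h: "h \<in> harmonic"
  shows "- inner u' h \<le> 33 * G^11 * data_error * norm h"
proof -
  have hV: "h \<in> V1" "d1 h = 0" using h unfolding harmonic_def by auto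
  obtain b where b: "b \<in> d0 ` V0" "h - b \<in> harmonic'" "inner (i1 (h - b)) (i1 b) = 0"
    using modified_hodge_decomposition[OF hV] by blast
  have nq: "norm (h - b) \<le> 2 * G^2 * norm h"
    using norm_triangle_ineq4[of h b] harmonic_boundary_part(2)[OF h b(1,3)]
      power_G_mono[of 0 2 "norm h"] by simp
  note nb = harmonic_boundary_part_small[OF h b(1,3)]
  have eu: "\<eta> * norm u' \<le> 11 * G^9 * data_error"
    by (rule eta_norm_le_data[OF norm_u_modified[OF modified']]) (simp add: G_nonneg)
  have "- inner u' h = (inner (i1 u') (i1 (h - b)) - inner u' (h - b)) - inner u' b"
    using modified_eq3[OF modified' b(2)] by (simp add: inner_diff_right)
  also have "\<dots> \<le> \<eta> * norm u' * norm (h - b) + norm u' * (G^2 * (\<eta> * norm h))"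
    using defect_le(3)[OF modified_mem(2)[OF modified'] V1_diff[OF hV(1) boundary_mem(1)[OF b(1)]]]
      Cauchy_Schwarz_ineq2[of u' b] mult_left_mono[OF nb norm_ge_zero[of u']] by linarith
  also have "\<dots> \<le> (11 * G^9 * data_error) * (2 * G^2 * norm h) + G^2 * (11 * G^9 * data_error) * norm h"
  proof -
    have "\<eta> * norm u' * norm (h - b) \<le> (11 * G^9 * data_error) * (2 * G^2 * norm h)"
      using mult_mono[OF eu nq] G_nonneg data_error_nonneg by simp
    moreover have "norm u' * (G^2 * (\<eta> * norm h)) \<le> G^2 * (11 * G^9 * data_error) * norm h"
      using mult_right_mono[OF mult_left_mono[OF eu, of "G^2"], of "norm h"] by (simp add: algebra_simps)
    ultimately show ?thesis by linarith
  qed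
  also have "\<dots> = 33 * G^11 * data_error * norm h" by (simp add: eval_nat_numeral algebra_simps)
  finally show ?thesis .
qed

lemma norm_harmonic_part_error:
  assumes y: "y \<in> V1" "norm y \<le> 13 * G^5 * data_error"
    and b: "b \<in> d0 ` V0" and h: "u - u' - y - b \<in> harmonic"
  shows "norm (u - u' - y - b) \<le> 46 * G^11 * data_error"
proof -
  define z where "z = u - u' - y - b"
  have "inner z z = inner u z - inner u' z - inner y z - inner b z"
    unfolding z_def by (simp add: inner_diff_left)
  also have "inner u z = 0" using galerkin_eq3 h unfolding z_def .
  also have "inner b z = 0" using h b unfolding z_def harmonic_def by (auto simp: inner_commute)
  finally have "norm z * norm z = - inner u' z - inner y z" by (simp add: norm_mult_norm_eq_inner)
  also have "\<dots> \<le> 33 * G^11 * data_error * norm z + 13 * G^5 * data_error * norm z"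
    using inner_modified_harmonic_le[OF h] inner_le_bound(2)[OF y(2), of z] unfolding z_def by linarith
  also have "\<dots> \<le> (46 * G^11 * data_error) * norm z"
  proof -
    have "G^5 * (data_error * norm z) \<le> G^11 * (data_error * norm z)"
      by (rule power_G_mono) (use data_error_nonneg in auto)
    then show ?thesis by (simp only: mult.assoc)
  qed
  finally show ?thesis unfolding z_def
    by (rule le_of_square_le) (use G_nonneg data_error_nonneg in simp_all)
qed

lemma norm_boundary_part_error:
  assumes y: "y \<in> V1" "norm y \<le> 13 * G^5 * data_error"
    and b: "b \<in> d0 ` V0" and orth: "inner (u - u' - y - b) b = 0"
  shows "norm b \<le> 32 * G^9 * data_error"
proof -
  obtain t where t: "t \<in> V0" "d0 t = b" "norm t \<le> G * norm b" using boundary_lift[OF b] by blast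
  have "norm b * norm b = inner (u - u') b - inner y b"
    using orth by (simp add: norm_mult_norm_eq_inner inner_diff_left)
  also have "inner (u - u') b = inner (s - s') t - (inner (i0 s') (i0 t) - inner s' t)
      + (inner (i1 u') (i1 b) - inner u' b)"
    using error_eq1[OF t(1)] t(2) by simp
  also have "\<dots> - inner y b \<le> 6 * G^4 * data_error * norm t + 2 * G^4 * data_error * norm t
      + 11 * G^9 * data_error * norm b + 13 * G^5 * data_error * norm b"
    using inner_le_bound(1)[OF norm_s_error, of t] inner_le_bound(2)[OF y(2), of b]
      defect_le(2)[OF modified_mem(1)[OF modified'] t(1)] defect_le_data[OF norm_s_modified[OF modified'], of t]
      defect_le(3)[OF modified_mem(2)[OF modified'] boundary_mem(1)[OF b]]
      defect_le_data[OF norm_u_modified[OF modified'], of b] G_nonneg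
    by (simp add: algebra_simps)
  also have "\<dots> \<le> (32 * G^9 * data_error) * norm b"
  proof -
    have "8 * G^4 * data_error * norm t \<le> 8 * G^4 * data_error * (G * norm b)"
      using t(3) G_nonneg data_error_nonneg by (intro mult_left_mono) auto
    moreover have "G^5 * (data_error * norm b) \<le> G^9 * (data_error * norm b)"
      by (rule power_G_mono) (use data_error_nonneg in auto)
    ultimately show ?thesis by (simp add: algebra_simps eval_nat_numeral)
  qed
  finally show ?thesis by (rule le_of_square_le) (use G_nonneg data_error_nonneg in simp_all)
qed

lemma norm_u_error: "norm (u - u') \<le> 91 * G^11 * data_error"
proof -
  obtain y where y: "y \<in> V1" "u - u' - y \<in> V1" "d1 (u - u' - y) = 0" "norm y \<le> G * norm (d1 (u - u'))"
    using poincare_split1[OF error_mem(2)] by metis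
  have ny: "norm y \<le> 13 * G^5 * data_error"
    using y(4) mult_left_mono[OF norm_d1_error G_nonneg] by (simp add: eval_nat_numeral algebra_simps)
  obtain b where b: "b \<in> d0 ` V0" "u - u' - y - b \<in> harmonic" "inner (u - u' - y - b) b = 0"
    using hodge_decomposition[OF y(2,3)] by blast
  have "norm (u - u') \<le> norm y + norm b + norm (u - u' - y - b)"
    using norm_triangle_ineq[of "y + b" "u - u' - y - b"] norm_triangle_ineq[of y b] by simp
  moreover have "G^5 * data_error \<le> G^11 * data_error" "G^9 * data_error \<le> G^11 * data_error"
    by (rule power_G_mono; use data_error_nonneg in simp)+
  ultimately show ?thesis
    using ny norm_boundary_part_error[OF y(1) ny b(1,3)] norm_harmonic_part_error[OF y(1) ny b(1,2)]
    by linarith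
qed

theorem solution_difference_le:
  "sqrt ((norm (s - s'))^2 + (norm (d0 (s - s')))^2) + sqrt ((norm (u - u'))^2 + (norm (d1 (u - u')))^2)
     + norm (p - p') \<le> 120 * G^11 * data_error"
proof -
  have "G^m * data_error \<le> G^11 * data_error" if "m \<le> 11" for m
    by (rule power_G_mono) (use that data_error_nonneg in auto)
  from this[of 1] this[of 4] have "G * data_error \<le> G^11 * data_error" "G^4 * data_error \<le> G^11 * data_error"
    by simp_all
  moreover have "0 \<le> G^11 * data_error" using G_nonneg data_error_nonneg by simp
  ultimately show ?thesis
    using sqrt_sum_squares_le_sum[OF norm_ge_zero norm_ge_zero, of "s - s'" "d0 (s - s')"]
      sqrt_sum_squares_le_sum[OF norm_ge_zero norm_ge_zero, of "u - u'" "d1 (u - u')"]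
      norm_s_error norm_d0_error norm_u_error norm_d1_error norm_p_error
    unfolding mult.assoc by linarith
qed

end

end

section \<open>Approximations of closed Hilbert complexes\<close>

lemma closed_hilbert_complexD:
  assumes "closed_hilbert_complex W V d"
  shows "subspace (W j)" "closed (W j)" "subspace (V j)" "V j \<subseteq> W j" "lin_on (V j) (d j)"
    "\<And>x. x \<in> V j \<Longrightarrow> d j x \<in> V (j + 1)" "\<And>x. x \<in> V j \<Longrightarrow> d (j + 1) (d j x) = 0"
    "closed (d j ` V j)" "closed ((\<lambda>x. (x, d j x)) ` V j)"
  using assms unfolding closed_hilbert_complex_def hilbert_complex_def by blast+

lemma vnorm_ge_norm: "norm x \<le> vnorm d j x"
  unfolding vnorm_def by (rule real_sqrt_sum_squares_ge1)

lemma vnorm_le: "vnorm d j x \<le> norm x + norm (d j x)"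
  unfolding vnorm_def by (rule sqrt_sum_squares_le_sum) auto

locale complex_approximation =
  fixes W V :: "int \<Rightarrow> 'w::{real_inner,complete_space} set" and d :: "int \<Rightarrow> 'w \<Rightarrow> 'w"
    and Wh Vh :: "int \<Rightarrow> 'v::{real_inner,complete_space} set" and dh :: "int \<Rightarrow> 'v \<Rightarrow> 'v"
    and i :: "int \<Rightarrow> 'v \<Rightarrow> 'w" and \<pi> :: "int \<Rightarrow> 'w \<Rightarrow> 'v" and K :: real
  assumes complex: "closed_hilbert_complex W V d"
    and complex_h: "closed_hilbert_complex Wh Vh dh"
    and i_lin: "\<And>j. lin_on (Wh j) (i j)"
    and i_V: "\<And>j. i j ` Vh j \<subseteq> V j"
    and i_comm: "\<And>j x. x \<in> Vh j \<Longrightarrow> i (j + 1) (dh j x) = d j (i j x)"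
    and i_bdd: "\<And>j x. x \<in> Wh j \<Longrightarrow> norm (i j x) \<le> K * norm x"
    and \<pi>_lin: "\<And>j. lin_on (V j) (\<pi> j)"
    and \<pi>_V: "\<And>j. \<pi> j ` V j \<subseteq> Vh j"
    and \<pi>_comm: "\<And>j x. x \<in> V j \<Longrightarrow> \<pi> (j + 1) (d j x) = dh j (\<pi> j x)"
    and \<pi>_bdd: "\<And>j x. x \<in> V j \<Longrightarrow> vnorm dh j (\<pi> j x) \<le> K * vnorm d j x"
    and \<pi>_i: "\<And>j x. x \<in> Vh j \<Longrightarrow> \<pi> j (i j x) = x"
    and K_ge_1: "1 \<le> K"
begin

sublocale i: bounded_lin_on "Wh j" "i j" K for j
  using closed_hilbert_complexD[OF complex_h] i_lin i_bdd by unfold_locales auto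

lemma i_lin_Vh: "lin_on (Vh j) (i j)"
  using lin_on_subset[OF i_lin closed_hilbert_complexD(4)[OF complex_h]] .

lemma cycle_norm_le:
  assumes x: "x \<in> Vh j" and dx: "dh j x = 0"
  shows "norm x \<le> K * norm (i j x)"
proof -
  have "i j x \<in> V j" using i_V x by blast
  moreover have "d j (i j x) = 0"
    using i_comm[OF x] dx lin_on_zero[OF i.subspace i.lin] by simp
  ultimately have "vnorm dh j (\<pi> j (i j x)) \<le> K * norm (i j x)"
    using \<pi>_bdd unfolding vnorm_def by fastforce
  then show ?thesis using vnorm_ge_norm[of x dh j] \<pi>_i[OF x] by simp
qed

lemma discrete_poincare:
  assumes c: "poincare_constant (V j) (d j) c" "0 \<le> c"
  shows "poincare_constant (Vh j) (dh j) (K^2 * (c + 1))"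
  unfolding poincare_constant_def
proof
  fix x assume x: "x \<in> Vh j"
  note cx = closed_hilbert_complexD[OF complex]
  define y where "y = i j x"
  have yV: "y \<in> V j" unfolding y_def using i_V x by blast
  obtain z0 where z0: "z0 \<in> V j" "d j z0 = 0" "norm (y - z0) \<le> c * norm (d j y)"
    using c(1) yV unfolding poincare_constant_def by blast
  have ndy: "norm (d j y) \<le> K * norm (dh j x)"
    unfolding y_def using i_comm[OF x] i_bdd closed_hilbert_complexD(4,6)[OF complex_h] x by force
  define z where "z = \<pi> j z0"
  have "z \<in> Vh j" unfolding z_def using \<pi>_V z0(1) by blast
  moreover have "dh j z = 0"
    unfolding z_def using \<pi>_comm[OF z0(1)] z0(2) lin_on_zero[OF cx(3) \<pi>_lin] by simp
  moreover have "norm (x - z) \<le> K^2 * (c + 1) * norm (dh j x)"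
  proof -
    have xz: "x - z = \<pi> j (y - z0)"
      unfolding z_def y_def using lin_on_diff[OF cx(3) \<pi>_lin yV z0(1)] \<pi>_i[OF x] y_def by simp
    have "norm (x - z) \<le> K * vnorm d j (y - z0)"
      using vnorm_ge_norm[of "x - z" dh j] \<pi>_bdd[OF subspace_diff[OF cx(3) yV z0(1)]] xz by simp
    also have "\<dots> \<le> K * (norm (y - z0) + norm (d j y))"
      using vnorm_le[of d j "y - z0"] lin_on_diff[OF cx(3) cx(5) yV z0(1)] z0(2) K_ge_1 by simp
    also have "\<dots> \<le> K * (c * (K * norm (dh j x)) + K * norm (dh j x))"
      using z0(3) ndy mult_left_mono[OF ndy c(2)] K_ge_1 by (intro mult_left_mono) auto
    also have "\<dots> = K^2 * (c + 1) * norm (dh j x)" by (simp add: power2_eq_square algebra_simps)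
    finally show ?thesis .
  qed
  ultimately show "\<exists>z\<in>Vh j. dh j z = 0 \<and> norm (x - z) \<le> K^2 * (c + 1) * norm (dh j x)" by blast
qed

lemma inner_Jop: "y \<in> Wh j \<Longrightarrow> inner (Jop Wh i j x) y = inner (i j x) (i j y)"
  unfolding Jop_def by (rule i.inner_hadj)

lemma Jop_defect:
  assumes "x \<in> Wh j" "y \<in> Wh j"
  shows "\<bar>inner x y - inner (i j x) (i j y)\<bar> \<le> opnorm_on (Wh j) (\<lambda>x. x - Jop Wh i j x) * norm x * norm y"
    and "0 \<le> opnorm_on (Wh j) (\<lambda>x. x - Jop Wh i j x)"
  using i.inner_pullback_defect[OF assms] unfolding Jop_def by auto

lemma hilbert_triple_at:
  assumes "poincare_constant (V (k - 1)) (d (k - 1)) c" "poincare_constant (V k) (d k) c" "0 \<le> c"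
  shows "hilbert_triple (Vh (k - 1)) (Vh k) (Vh (k + 1)) (dh (k - 1)) (dh k)
    (i (k - 1)) (i k) (i (k + 1)) (K^2 * (c + 1))"
proof -
  note ch = closed_hilbert_complexD[OF complex_h]
  have KG: "K \<le> K^2 * (c + 1)"
  proof -
    have "K * 1 \<le> K * (K * (c + 1))"
      using K_ge_1 assms(3) mult_mono[of 1 K 1 "c + 1"] by (intro mult_left_mono) auto
    then show ?thesis by (simp add: power2_eq_square)
  qed
  then have KGx: "K * x \<le> K^2 * (c + 1) * x" if "0 \<le> x" for x using that by (rule mult_right_mono)
  show ?thesis
  proof
    show "poincare_constant (Vh (k - 1)) (dh (k - 1)) (K^2 * (c + 1))"
      "poincare_constant (Vh k) (dh k) (K^2 * (c + 1))"
      using discrete_poincare assms by blast+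
    show "1 \<le> K^2 * (c + 1)" using KG K_ge_1 by linarith
    fix x
    show "x \<in> Vh (k - 1) \<Longrightarrow> norm (i (k - 1) x) \<le> K^2 * (c + 1) * norm x"
      "x \<in> Vh k \<Longrightarrow> norm (i k x) \<le> K^2 * (c + 1) * norm x"
      using i_bdd ch(4) KGx order_trans norm_ge_zero by (meson subsetD)+
    show "x \<in> Vh (k - 1) \<Longrightarrow> dh (k - 1) x = 0 \<Longrightarrow> norm x \<le> K^2 * (c + 1) * norm (i (k - 1) x)"
      "x \<in> Vh k \<Longrightarrow> dh k x = 0 \<Longrightarrow> norm x \<le> K^2 * (c + 1) * norm (i k x)"
      using cycle_norm_le KGx order_trans norm_ge_zero by meson+
    show "x \<in> Vh k \<Longrightarrow> norm (dh k x) \<le> K^2 * (c + 1) * norm (i (k + 1) (dh k x))"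
      using cycle_norm_le[of "dh k x" "k + 1"] ch(6,7) KGx order_trans norm_ge_zero by meson
    show "x \<in> Vh (k - 1) \<Longrightarrow> dh (k - 1) x \<in> Vh k"
      "x \<in> Vh (k - 1) \<Longrightarrow> dh k (dh (k - 1) x) = 0"
      using ch(6,7)[of x "k - 1"] by simp_all
  qed (use ch i_lin_Vh in simp_all)
qed

end

context complex_approximation
begin

lemma modified_solution_Jop:
  fixes k :: int
  assumes "hilbert_triple (Vh (k - 1)) (Vh k) (Vh (k + 1)) (dh (k - 1)) (dh k) (i (k - 1)) (i k) (i (k + 1)) G"
    and s': "s' \<in> Vh (k - 1)" and u': "u' \<in> Vh k" and p': "p' \<in> harmonic_sp' Vh dh i k"
    and eq1': "\<forall>t\<in>Vh (k - 1). inner (Jop Wh i (k - 1) s') t - inner (Jop Wh i k u') (dh (k - 1) t) = 0"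
    and eq2': "\<forall>v\<in>Vh k. inner (Jop Wh i k (dh (k - 1) s')) v + inner (Jop Wh i (k + 1) (dh k u')) (dh k v)
                   + inner (Jop Wh i k p') v = inner (hadj (Wh k) (i k) f) v"
    and eq3': "\<forall>q\<in>harmonic_sp' Vh dh i k. inner (Jop Wh i k u') q = 0"
  shows "hilbert_triple.modified_solution (Vh (k - 1)) (Vh k) (dh (k - 1)) (dh k)
    (i (k - 1)) (i k) (i (k + 1)) f s' u' p'"
proof -
  interpret T: hilbert_triple "Vh (k - 1)" "Vh k" "Vh (k + 1)" "dh (k - 1)" "dh k"
    "i (k - 1)" "i k" "i (k + 1)" G by fact
  note ch = closed_hilbert_complexD[OF complex_h]
  have VW: "x \<in> Vh j \<Longrightarrow> x \<in> Wh j" for x j using ch(4) by blast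
  show ?thesis unfolding T.modified_solution_def
  proof (intro conjI ballI)
    show "p' \<in> T.harmonic'"
      using p' unfolding T.harmonic'_def harmonic_sp'_def by simp
    fix t assume t: "t \<in> Vh (k - 1)"
    then show "inner (i (k - 1) s') (i (k - 1) t) = inner (i k u') (i k (dh (k - 1) t))"
      using eq1'[rule_format, OF t] inner_Jop[OF VW[OF t]] inner_Jop[OF VW[OF ch(6)[OF t]]] by simp
  next
    fix v assume v: "v \<in> Vh k"
    then show "inner (i k (dh (k - 1) s')) (i k v) + inner (i (k + 1) (dh k u')) (i (k + 1) (dh k v))
      + inner (i k p') (i k v) = inner f (i k v)"
      using eq2'[rule_format, OF v] inner_Jop[OF VW[OF v]] inner_Jop[OF VW[OF ch(6)[OF v]]]
        i.inner_hadj[OF VW[OF v]] by simp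
  next
    fix q assume "q \<in> T.harmonic'"
    then show "inner (i k u') (i k q) = 0"
      using eq3' inner_Jop[OF VW] unfolding T.harmonic'_def harmonic_sp'_def by auto
  qed (use s' u' in simp_all)
qed

lemma galerkin_modified_difference_le:
  fixes k :: int
  assumes c: "poincare_constant (V (k - 1)) (d (k - 1)) c" "poincare_constant (V k) (d k) c" "0 \<le> c"
    and s: "s \<in> Vh (k - 1)" and u: "u \<in> Vh k" and p: "p \<in> harmonic_sp Vh dh k"
    and eq1: "\<forall>t\<in>Vh (k - 1). inner s t - inner u (dh (k - 1) t) = 0"
    and eq2: "\<forall>v\<in>Vh k. inner (dh (k - 1) s) v + inner (dh k u) (dh k v) + inner p v = inner fh v"
    and eq3: "\<forall>q\<in>harmonic_sp Vh dh k. inner u q = 0"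
    and s': "s' \<in> Vh (k - 1)" and u': "u' \<in> Vh k" and p': "p' \<in> harmonic_sp' Vh dh i k"
    and eq1': "\<forall>t\<in>Vh (k - 1). inner (Jop Wh i (k - 1) s') t - inner (Jop Wh i k u') (dh (k - 1) t) = 0"
    and eq2': "\<forall>v\<in>Vh k. inner (Jop Wh i k (dh (k - 1) s')) v + inner (Jop Wh i (k + 1) (dh k u')) (dh k v)
                   + inner (Jop Wh i k p') v = inner (hadj (Wh k) (i k) f) v"
    and eq3': "\<forall>q\<in>harmonic_sp' Vh dh i k. inner (Jop Wh i k u') q = 0"
  shows "vnorm dh (k - 1) (s - s') + vnorm dh k (u - u') + norm (p - p')
    \<le> 120 * (K^2 * (c + 1))^11 * (norm (fh - hadj (Wh k) (i k) f)
        + Max ((\<lambda>j. opnorm_on (Wh j) (\<lambda>x. x - Jop Wh i j x)) ` {k - 1, k, k + 1}) * norm f)"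
proof -
  interpret T: hilbert_triple "Vh (k - 1)" "Vh k" "Vh (k + 1)" "dh (k - 1)" "dh k"
    "i (k - 1)" "i k" "i (k + 1)" "K^2 * (c + 1)"
    by (rule hilbert_triple_at[OF c])
  note ch = closed_hilbert_complexD[OF complex_h]
  have VW: "x \<in> Vh j \<Longrightarrow> x \<in> Wh j" for x j using ch(4) by blast
  define \<eta> where "\<eta> = Max ((\<lambda>j. opnorm_on (Wh j) (\<lambda>x. x - Jop Wh i j x)) ` {k - 1, k, k + 1})"
  have \<eta>: "opnorm_on (Wh j) (\<lambda>x. x - Jop Wh i j x) \<le> \<eta>" if "j \<in> {k - 1, k, k + 1}" for j
    unfolding \<eta>_def using that by (intro Max_ge) auto
  have defect: "\<bar>inner x y - inner (i j x) (i j y)\<bar> \<le> \<eta> * norm x * norm y"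
    if "j \<in> {k - 1, k, k + 1}" "x \<in> Vh j" "y \<in> Vh j" for j x y
    using Jop_defect(1)[OF VW VW, OF that(2,3)] mult_right_mono[OF \<eta>[OF that(1)], of "norm x * norm y"]
    by (simp add: mult.assoc)
  have \<eta>_nonneg: "0 \<le> \<eta>" using Jop_defect(2)[OF subspace_0[OF ch(1)] subspace_0[OF ch(1)], of k] \<eta>[of k] by simp
  have galerkin: "T.galerkin_solution fh s u p"
    using s u p eq1 eq2 eq3 unfolding T.galerkin_solution_def T.harmonic_def harmonic_sp_def by auto
  have modified: "T.modified_solution f s' u' p'"
    by (rule modified_solution_Jop[OF T.hilbert_triple_axioms s' u' p' eq1' eq2' eq3'])
  have adjoint: "\<And>v. v \<in> Vh k \<Longrightarrow> inner (hadj (Wh k) (i k) f) v = inner f (i k v)"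
    using i.inner_hadj VW by blast
  show ?thesis
    using T.solution_difference_le[OF galerkin modified adjoint defect[of "k - 1"] defect[of k] defect[of "k + 1"]
        \<eta>_nonneg]
    unfolding vnorm_def \<eta>_def by simp
qed

end

theorem mainTheorem9:
  fixes W V :: "int \<Rightarrow> 'w::{real_inner,complete_space} set"
    and d :: "int \<Rightarrow> 'w \<Rightarrow> 'w"
    and Wh Vh :: "real \<Rightarrow> int \<Rightarrow> 'v::{real_inner,complete_space} set"
    and dh :: "real \<Rightarrow> int \<Rightarrow> 'v \<Rightarrow> 'v"
    and ih :: "real \<Rightarrow> int \<Rightarrow> 'v \<Rightarrow> 'w"
    and ph :: "real \<Rightarrow> int \<Rightarrow> 'w \<Rightarrow> 'v"
    and k :: int
  assumes cplx: "closed_hilbert_complex W V d"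
    and cplxh: "\<And>h. h > 0 \<Longrightarrow> closed_hilbert_complex (Wh h) (Vh h) (dh h)"
    and i_lin: "\<And>h j. h > 0 \<Longrightarrow> lin_on (Wh h j) (ih h j)"
    and i_W: "\<And>h j. h > 0 \<Longrightarrow> ih h j ` Wh h j \<subseteq> W j"
    and i_V: "\<And>h j. h > 0 \<Longrightarrow> ih h j ` Vh h j \<subseteq> V j"
    and i_comm: "\<And>h j x. h > 0 \<Longrightarrow> x \<in> Vh h j \<Longrightarrow> ih h (j + 1) (dh h j x) = d j (ih h j x)"
    and i_bdd: "\<exists>K. \<forall>h>0. \<forall>j. \<forall>x\<in>Wh h j. norm (ih h j x) \<le> K * norm x"
    and p_lin: "\<And>h j. h > 0 \<Longrightarrow> lin_on (V j) (ph h j)"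
    and p_V: "\<And>h j. h > 0 \<Longrightarrow> ph h j ` V j \<subseteq> Vh h j"
    and p_comm: "\<And>h j x. h > 0 \<Longrightarrow> x \<in> V j \<Longrightarrow> ph h (j + 1) (d j x) = dh h j (ph h j x)"
    and p_bdd: "\<exists>K. \<forall>h>0. \<forall>j. \<forall>x\<in>V j. vnorm (dh h) j (ph h j x) \<le> K * vnorm d j x"
    and p_i: "\<And>h j x. h > 0 \<Longrightarrow> x \<in> Vh h j \<Longrightarrow> ph h j (ih h j x) = x"
  shows "\<exists>C. \<forall>h>0. \<forall>f fh s u p s' u' p'.
     f \<in> W k \<longrightarrow> fh \<in> Wh h k \<longrightarrow>
     s \<in> Vh h (k - 1) \<longrightarrow> u \<in> Vh h k \<longrightarrow> p \<in> harmonic_sp (Vh h) (dh h) k \<longrightarrow>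
     (\<forall>t\<in>Vh h (k - 1). inner s t - inner u (dh h (k - 1) t) = 0) \<longrightarrow>
     (\<forall>v\<in>Vh h k. inner (dh h (k - 1) s) v + inner (dh h k u) (dh h k v) + inner p v = inner fh v) \<longrightarrow>
     (\<forall>q\<in>harmonic_sp (Vh h) (dh h) k. inner u q = 0) \<longrightarrow>
     s' \<in> Vh h (k - 1) \<longrightarrow> u' \<in> Vh h k \<longrightarrow> p' \<in> harmonic_sp' (Vh h) (dh h) (ih h) k \<longrightarrow>
     (\<forall>t\<in>Vh h (k - 1). inner (Jop (Wh h) (ih h) (k - 1) s') t
                         - inner (Jop (Wh h) (ih h) k u') (dh h (k - 1) t) = 0) \<longrightarrow>
     (\<forall>v\<in>Vh h k. inner (Jop (Wh h) (ih h) k (dh h (k - 1) s')) v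
                   + inner (Jop (Wh h) (ih h) (k + 1) (dh h k u')) (dh h k v)
                   + inner (Jop (Wh h) (ih h) k p') v
                 = inner (hadj (Wh h k) (ih h k) f) v) \<longrightarrow>
     (\<forall>q\<in>harmonic_sp' (Vh h) (dh h) (ih h) k. inner (Jop (Wh h) (ih h) k u') q = 0) \<longrightarrow>
     vnorm (dh h) (k - 1) (s - s') + vnorm (dh h) k (u - u') + norm (p - p')
       \<le> C * (norm (fh - hadj (Wh h k) (ih h k) f)
              + Max ((\<lambda>j. opnorm_on (Wh h j) (\<lambda>x. x - Jop (Wh h) (ih h) j x)) ` {k - 1, k, k + 1})
                * norm f)"
proof -
  note cx = closed_hilbert_complexD[OF cplx]
  obtain c0 c1 where c0: "0 \<le> c0" "poincare_constant (V (k - 1)) (d (k - 1)) c0"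
    and c1: "0 \<le> c1" "poincare_constant (V k) (d k) c1"
    using closed_range_poincare[OF cx(3,5,8,9)] by metis
  define c where "c = max c0 c1"
  have c: "poincare_constant (V (k - 1)) (d (k - 1)) c" "poincare_constant (V k) (d k) c" "0 \<le> c"
    using poincare_constant_mono[OF c0(2), of c] poincare_constant_mono[OF c1(2), of c] c0(1)
    unfolding c_def by auto
  obtain Ki Kp where Ki: "\<forall>h>0. \<forall>j. \<forall>x\<in>Wh h j. norm (ih h j x) \<le> Ki * norm x"
    and Kp: "\<forall>h>0. \<forall>j. \<forall>x\<in>V j. vnorm (dh h) j (ph h j x) \<le> Kp * vnorm d j x"
    using i_bdd p_bdd by blast
  define K where "K = max 1 (max Ki Kp)"
  have approx: "complex_approximation W V d (Wh h) (Vh h) (dh h) (ih h) (ph h) K" if h: "h > 0" for h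
  proof
    show "norm (ih h j x) \<le> K * norm x" if "x \<in> Wh h j" for j x
      using Ki h that mult_right_mono[of Ki K "norm x"] unfolding K_def by fastforce
    show "vnorm (dh h) j (ph h j x) \<le> K * vnorm d j x" if "x \<in> V j" for j x
      using Kp h that mult_right_mono[of Kp K "vnorm d j x"] unfolding K_def vnorm_def by fastforce
  qed (use cplx cplxh i_lin i_V i_comm p_lin p_V p_comm p_i h K_def in auto)
  show ?thesis
    by (intro exI[of _ "120 * (K^2 * (c + 1))^11"] allI impI,
        rule complex_approximation.galerkin_modified_difference_le[OF approx c]) assumption+
qed

end
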